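(* Assume (A1) and (A2). There is an absolute constant $c$ such that if $n\ge c\,\bar\kappa^2r^2\log k/\tau^2$, then with high probability $$\|Q^{-1/2}(\nabla f(x^* )-n\mathbf 1)\|_2\le\widetilde O(\sqrt{nr})\quad\text{and}\quad\|Q^{-1/2}(\nabla f(x^* )-n\mathbf 1)\|_\infty\le\widetilde O(\sqrt n).$$
   Context: $A\in\mathbb{R}^{D\times k}$ is a word-topic matrix (nonnegative entries, columns summing to $1$). $x^*\in\{z\in\mathbb{R}^k_{\ge0}:\sum z_i=1\}$; a document of $n$ words $w_1,\dots,w_n$ is drawn i.i.d. from the categorical distribution on $[D]$ with probabilities $Ax^*$. Assumption (A1): $R=\mathrm{supp}(x^* )$ has $|R|\le r$ and $x^*_i\ge\tau/r$ for all $i\in R$, where $\tau\in(0,1]$. Assumption (A2): for every $r$-sparse $v\in\mathbb{R}^k$, $\|Av\|_1\ge\|v\|_1/\bar\kappa$. Vectors supported on $R$ are identified with vectors in $\mathbb{R}^R$; $\mathbf 1\in\mathbb{R}^R$ is the all-ones vector. $\hat a_w\in\mathbb{R}^R$ is the $w$-th row of $A$ restricted to the columns in $R$. The restricted log-likelihood is $f(x)=\sum_{t=1}^n\log\langle\hat a_{w_t},x\rangle$, so $\nabla f(x^* )=\sum_{t=1}^n\hat a_{w_t}/\langle\hat a_{w_t},x^*\rangle$. The Fisher information matrix is $Q=\sum_{i\in[D]:\hat a_i\neq 0}\hat a_i\hat a_i^\top/\langle\hat a_i,x^*\rangle\in\mathbb{R}^{R\times R}$ (it is positive definite under (A2)).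 "With high probability" means with probability $1-o(1)$ as $k\to\infty$, and $\widetilde O(\cdot)$ hides constant and polylogarithmic-in-$k$ factors. *)

theory Defs
  imports "HOL-Probability.Probability"
begin

text \<open>Words are indexed by {..<D}, topics by {..<k}.
  A word-topic matrix is A :: nat => nat => real (A w i = entry in row w, column i).
  Vectors indexed by a finite set I are functions nat => real (values outside I irrelevant);
  matrices on I x I are functions nat => nat => real.\<close>

definition topic_matrix :: "nat \<Rightarrow> nat \<Rightarrow> (nat \<Rightarrow> nat \<Rightarrow> real) \<Rightarrow> bool" where
  "topic_matrix D k A \<longleftrightarrow>
     (\<forall>w<D. \<forall>i<k. A w i \<ge> 0) \<and> (\<forall>i<k. (\<Sum>w<D. A w i) = 1)"

definition simplex_pt :: "nat \<Rightarrow> (nat \<Rightarrow> real) \<Rightarrow> bool" where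
  "simplex_pt k x \<longleftrightarrow> (\<forall>i<k. x i \<ge> 0) \<and> (\<forall>i\<ge>k. x i = 0) \<and> (\<Sum>i<k. x i) = 1"

definition supp_set :: "nat \<Rightarrow> (nat \<Rightarrow> real) \<Rightarrow> nat set" where
  "supp_set k x = {i. i < k \<and> x i \<noteq> 0}"

definition assm_A1 :: "nat \<Rightarrow> nat \<Rightarrow> real \<Rightarrow> (nat \<Rightarrow> real) \<Rightarrow> bool" where
  "assm_A1 k r \<tau> x \<longleftrightarrow> card (supp_set k x) \<le> r \<and> (\<forall>i\<in>supp_set k x. x i \<ge> \<tau> / real r)"

definition assm_A2 :: "nat \<Rightarrow> nat \<Rightarrow> nat \<Rightarrow> real \<Rightarrow> (nat \<Rightarrow> nat \<Rightarrow> real) \<Rightarrow> bool" where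
  "assm_A2 D k r \<kappa> A \<longleftrightarrow>
     (\<forall>v :: nat \<Rightarrow> real. (\<forall>i\<ge>k. v i = 0) \<and> card {i. i < k \<and> v i \<noteq> 0} \<le> r \<longrightarrow>
        (\<Sum>w<D. \<bar>\<Sum>i<k. A w i * v i\<bar>) \<ge> (\<Sum>i<k. \<bar>v i\<bar>) / \<kappa>)"

definition word_pmf :: "nat \<Rightarrow> nat \<Rightarrow> (nat \<Rightarrow> nat \<Rightarrow> real) \<Rightarrow> (nat \<Rightarrow> real) \<Rightarrow> nat pmf" where
  "word_pmf D k A x = embed_pmf (\<lambda>w. if w < D then (\<Sum>i<k. A w i * x i) else 0)"

definition document_pmf :: "nat \<Rightarrow> nat \<Rightarrow> nat \<Rightarrow> (nat \<Rightarrow> nat \<Rightarrow> real) \<Rightarrow> (nat \<Rightarrow> real) \<Rightarrow> (nat \<Rightarrow> nat) pmf" where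
  "document_pmf n D k A x = Pi_pmf {..<n} 0 (\<lambda>_. word_pmf D k A x)"

definition row_inner :: "nat set \<Rightarrow> (nat \<Rightarrow> nat \<Rightarrow> real) \<Rightarrow> nat \<Rightarrow> (nat \<Rightarrow> real) \<Rightarrow> real" where
  "row_inner R A w x = (\<Sum>j\<in>R. A w j * x j)"

definition grad_f :: "nat \<Rightarrow> nat set \<Rightarrow> (nat \<Rightarrow> nat \<Rightarrow> real) \<Rightarrow> (nat \<Rightarrow> real) \<Rightarrow> (nat \<Rightarrow> nat) \<Rightarrow> nat \<Rightarrow> real" where
  "grad_f n R A x ws i = (\<Sum>t<n. A (ws t) i / row_inner R A (ws t) x)"

definition fisher :: "nat \<Rightarrow> nat set \<Rightarrow> (nat \<Rightarrow> nat \<Rightarrow> real) \<Rightarrow> (nat \<Rightarrow> real) \<Rightarrow> nat \<Rightarrow> nat \<Rightarrow> real" where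
  "fisher D R A x i j =
     (\<Sum>w\<in>{w. w < D \<and> (\<exists>l\<in>R. A w l \<noteq> 0)}. A w i * A w j / row_inner R A w x)"

definition mat_mult_on :: "nat set \<Rightarrow> (nat \<Rightarrow> nat \<Rightarrow> real) \<Rightarrow> (nat \<Rightarrow> nat \<Rightarrow> real) \<Rightarrow> nat \<Rightarrow> nat \<Rightarrow> real" where
  "mat_mult_on I M N i j = (\<Sum>l\<in>I. M i l * N l j)"

definition mat_vec_on :: "nat set \<Rightarrow> (nat \<Rightarrow> nat \<Rightarrow> real) \<Rightarrow> (nat \<Rightarrow> real) \<Rightarrow> nat \<Rightarrow> real" where
  "mat_vec_on I M v i = (\<Sum>j\<in>I. M i j * v j)"

definition pos_def_on :: "nat set \<Rightarrow> (nat \<Rightarrow> nat \<Rightarrow> real) \<Rightarrow> bool" where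
  "pos_def_on I M \<longleftrightarrow> (\<forall>i\<in>I. \<forall>j\<in>I. M i j = M j i) \<and>
     (\<forall>v. (\<exists>i\<in>I. v i \<noteq> 0) \<longrightarrow> (\<Sum>i\<in>I. \<Sum>j\<in>I. v i * M i j * v j) > 0)"

definition inv_sqrt_on :: "nat set \<Rightarrow> (nat \<Rightarrow> nat \<Rightarrow> real) \<Rightarrow> nat \<Rightarrow> nat \<Rightarrow> real" where
  "inv_sqrt_on I Q = (THE M. (\<forall>i j. (i \<notin> I \<or> j \<notin> I) \<longrightarrow> M i j = 0) \<and> pos_def_on I M \<and>
      (\<forall>i\<in>I. \<forall>j\<in>I. mat_mult_on I (mat_mult_on I M M) Q i j = (if i = j then 1 else 0)))"

definition l2_on :: "nat set \<Rightarrow> (nat \<Rightarrow> real) \<Rightarrow> real" where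
  "l2_on I v = sqrt (\<Sum>i\<in>I. (v i)\<^sup>2)"

definition linf_on :: "nat set \<Rightarrow> (nat \<Rightarrow> real) \<Rightarrow> real" where
  "linf_on I v = Max ((\<lambda>i. \<bar>v i\<bar>) ` I)"

definition whitened_grad :: "nat \<Rightarrow> nat \<Rightarrow> nat \<Rightarrow> (nat \<Rightarrow> nat \<Rightarrow> real) \<Rightarrow> (nat \<Rightarrow> real) \<Rightarrow> (nat \<Rightarrow> nat) \<Rightarrow> nat \<Rightarrow> real" where
  "whitened_grad n D k A x ws =
     (let R = supp_set k x in
      mat_vec_on R (inv_sqrt_on R (fisher D R A x)) (\<lambda>i. grad_f n R A x ws i - real n))"

end

theory Submission
  imports Defs "HOL-Computational_Algebra.Formal_Power_Series"
begin

text \<open>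
  The whitened gradient \<open>Q\<^sup>-\<^sup>1\<^sup>/\<^sup>2 (\<nabla>f(x\<^sup>*) - n \<one>)\<close> is a sum of \<open>n\<close> i.i.d.\ copies of the per-word
  score \<open>Y\<^sub>w = Q\<^sup>-\<^sup>1\<^sup>/\<^sup>2 (\<hat>a\<^sub>w / \<langle>\<hat>a\<^sub>w, x\<^sup>*\<rangle> - \<one>)\<close>. The vector \<open>\<hat>a\<^sub>w / \<langle>\<hat>a\<^sub>w, x\<^sup>*\<rangle>\<close> has mean \<open>\<one>\<close> and
  second moment matrix exactly \<open>Q\<close>, so \<open>Y\<^sub>w\<close> is centred and each coordinate has variance at most
  \<open>1\<close>. By (A1) and (A2) each coordinate is also bounded by \<open>2\<kappa>r/\<tau>\<close>, which makes the Chernoff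
  bound at level \<open>4\<surd>(n ln k)\<close> applicable once \<open>n \<ge> 16 \<kappa>\<^sup>2 r\<^sup>2 ln k / \<tau>\<^sup>2\<close>; it fails with
  probability at most \<open>2k\<^sup>-\<^sup>4\<close> per coordinate, and a union bound over the at most \<open>k\<close> coordinates
  gives both norm bounds with probability \<open>1 - 2k\<^sup>-\<^sup>3\<close>.

  The matrix \<open>Q\<^sup>-\<^sup>1\<^sup>/\<^sup>2\<close> is defined by a uniqueness property, so it has to be constructed: after
  rescaling \<open>Q = s (id - B)\<close> with \<open>0 \<le> B \<le> \<beta> < 1\<close>, the binomial series of \<open>(1 - z)\<^sup>-\<^sup>1\<^sup>/\<^sup>2\<close> in \<open>B\<close>
  converges and squares to the Neumann series of \<open>(id - B)\<^sup>-\<^sup>1\<close>.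
\<close>

section \<open>Matrices on finite index sets\<close>

definition inner_on :: "nat set \<Rightarrow> (nat \<Rightarrow> real) \<Rightarrow> (nat \<Rightarrow> real) \<Rightarrow> real" where
  "inner_on I u v = (\<Sum>i\<in>I. u i * v i)"

definition sq_norm_on :: "nat set \<Rightarrow> (nat \<Rightarrow> real) \<Rightarrow> real" where
  "sq_norm_on I v = inner_on I v v"

definition id_mat :: "nat \<Rightarrow> nat \<Rightarrow> real" where
  "id_mat i j = (if i = j then 1 else 0)"

definition symmetric_on :: "nat set \<Rightarrow> (nat \<Rightarrow> nat \<Rightarrow> real) \<Rightarrow> bool" where
  "symmetric_on I M \<longleftrightarrow> (\<forall>i\<in>I. \<forall>j\<in>I. M i j = M j i)"

lemma mat_mult_on_cong:
  "(\<And>l. l \<in> I \<Longrightarrow> M i l = M' i l) \<Longrightarrow> (\<And>l. l \<in> I \<Longrightarrow> N l j = N' l j) \<Longrightarrow>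
   mat_mult_on I M N i j = mat_mult_on I M' N' i j"
  unfolding mat_mult_on_def by (intro sum.cong) auto

lemma mat_vec_on_cong:
  "(\<And>l. l \<in> I \<Longrightarrow> M i l = M' i l) \<Longrightarrow> (\<And>l. l \<in> I \<Longrightarrow> v l = v' l) \<Longrightarrow>
   mat_vec_on I M v i = mat_vec_on I M' v' i"
  unfolding mat_vec_on_def by (intro sum.cong) auto

lemma inner_on_cong:
  "(\<And>l. l \<in> I \<Longrightarrow> u l = u' l) \<Longrightarrow> (\<And>l. l \<in> I \<Longrightarrow> v l = v' l) \<Longrightarrow>
   inner_on I u v = inner_on I u' v'"
  unfolding inner_on_def by (intro sum.cong) auto

lemma mat_mult_on_assoc:
  "mat_mult_on I (mat_mult_on I L M) N i j = mat_mult_on I L (mat_mult_on I M N) i j"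
proof -
  have "mat_mult_on I (mat_mult_on I L M) N i j = (\<Sum>l\<in>I. \<Sum>p\<in>I. L i p * M p l * N l j)"
    unfolding mat_mult_on_def by (simp add: sum_distrib_right)
  also have "\<dots> = (\<Sum>p\<in>I. \<Sum>l\<in>I. L i p * M p l * N l j)" by (rule sum.swap)
  also have "\<dots> = mat_mult_on I L (mat_mult_on I M N) i j"
    unfolding mat_mult_on_def by (simp add: sum_distrib_left mult.assoc)
  finally show ?thesis .
qed

lemma mat_vec_on_mat_mult_on:
  "mat_vec_on I (mat_mult_on I M N) v i = mat_vec_on I M (mat_vec_on I N v) i"
proof -
  have "mat_vec_on I (mat_mult_on I M N) v i = (\<Sum>l\<in>I. \<Sum>p\<in>I. M i p * N p l * v l)"
    unfolding mat_mult_on_def mat_vec_on_def by (simp add: sum_distrib_right)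
  also have "\<dots> = (\<Sum>p\<in>I. \<Sum>l\<in>I. M i p * N p l * v l)" by (rule sum.swap)
  also have "\<dots> = mat_vec_on I M (mat_vec_on I N v) i"
    unfolding mat_vec_on_def by (simp add: sum_distrib_left mult.assoc)
  finally show ?thesis .
qed

lemma mat_mult_on_id_left: "finite I \<Longrightarrow> i \<in> I \<Longrightarrow> mat_mult_on I id_mat M i j = M i j"
  unfolding mat_mult_on_def id_mat_def by (simp add: if_distrib if_distribR cong: if_cong)

lemma mat_mult_on_id_right: "finite I \<Longrightarrow> j \<in> I \<Longrightarrow> mat_mult_on I M id_mat i j = M i j"
  unfolding mat_mult_on_def id_mat_def by (simp add: if_distrib cong: if_cong)

lemma mat_vec_on_id: "finite I \<Longrightarrow> i \<in> I \<Longrightarrow> mat_vec_on I id_mat v i = v i"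
  unfolding mat_vec_on_def id_mat_def by (simp add: if_distrib if_distribR cong: if_cong)

lemma inner_on_commute: "inner_on I u v = inner_on I v u"
  unfolding inner_on_def by (simp add: mult.commute)

lemma inner_on_mat_vec_on_symmetric:
  assumes "symmetric_on I M"
  shows "inner_on I u (mat_vec_on I M v) = inner_on I (mat_vec_on I M u) v"
proof -
  have "inner_on I u (mat_vec_on I M v) = (\<Sum>i\<in>I. \<Sum>j\<in>I. u i * M i j * v j)"
    unfolding inner_on_def mat_vec_on_def by (simp add: sum_distrib_left mult.assoc)
  also have "\<dots> = (\<Sum>j\<in>I. \<Sum>i\<in>I. M j i * u i * v j)"
    using assms unfolding symmetric_on_def
    by (subst sum.swap) (intro sum.cong refl, simp add: mult.commute)
  also have "\<dots> = inner_on I (mat_vec_on I M u) v"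
    unfolding inner_on_def mat_vec_on_def by (simp add: sum_distrib_right)
  finally show ?thesis .
qed

lemma quad_form_eq_inner_on: "(\<Sum>i\<in>I. \<Sum>j\<in>I. v i * M i j * v j) = inner_on I v (mat_vec_on I M v)"
  unfolding inner_on_def mat_vec_on_def by (simp add: sum_distrib_left mult.assoc)

lemma sq_norm_on_nonneg: "0 \<le> sq_norm_on I v"
  unfolding sq_norm_on_def inner_on_def by (simp add: sum_nonneg)

lemma sq_norm_on_eq_sum_power2: "sq_norm_on I v = (\<Sum>i\<in>I. (v i)\<^sup>2)"
  unfolding sq_norm_on_def inner_on_def by (simp add: power2_eq_square)

lemma power2_le_sq_norm_on: "finite I \<Longrightarrow> i \<in> I \<Longrightarrow> (v i)\<^sup>2 \<le> sq_norm_on I v"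
  unfolding sq_norm_on_eq_sum_power2 by (rule member_le_sum) auto

lemma sq_norm_on_pos: "finite I \<Longrightarrow> i \<in> I \<Longrightarrow> v i \<noteq> 0 \<Longrightarrow> 0 < sq_norm_on I v"
  using power2_le_sq_norm_on[of I i v] by (metis order_less_le_trans zero_less_power2)

lemma sq_norm_on_column_id_mat: "finite I \<Longrightarrow> l \<in> I \<Longrightarrow> sq_norm_on I (\<lambda>i. id_mat i l) = 1"
  unfolding sq_norm_on_def inner_on_def id_mat_def by (simp add: if_distrib cong: if_cong)

lemma inner_on_mat_vec_on_id: "finite I \<Longrightarrow> inner_on I v (mat_vec_on I id_mat v) = sq_norm_on I v"
  unfolding sq_norm_on_def by (rule inner_on_cong) (auto simp: mat_vec_on_id)

lemma mat_vec_on_lincomb: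
  "mat_vec_on I M (\<lambda>i. a * u i + b * v i) j = a * mat_vec_on I M u j + b * mat_vec_on I M v j"
  unfolding mat_vec_on_def by (simp add: sum.distrib sum_distrib_left algebra_simps)

lemma inner_on_lincomb_left:
  "inner_on I (\<lambda>i. a * u i + b * v i) w = a * inner_on I u w + b * inner_on I v w"
  unfolding inner_on_def by (simp add: sum.distrib sum_distrib_left algebra_simps)

lemma inner_on_lincomb_right:
  "inner_on I w (\<lambda>i. a * u i + b * v i) = a * inner_on I w u + b * inner_on I w v"
  unfolding inner_on_def by (simp add: sum.distrib sum_distrib_left algebra_simps)

lemma quad_form_lincomb:
  "inner_on I (\<lambda>i. a * u i + b * v i) (mat_vec_on I M (\<lambda>i. a * u i + b * v i)) =
   a\<^sup>2 * inner_on I u (mat_vec_on I M u)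
   + a * b * (inner_on I u (mat_vec_on I M v) + inner_on I v (mat_vec_on I M u))
   + b\<^sup>2 * inner_on I v (mat_vec_on I M v)"
proof -
  have "mat_vec_on I M (\<lambda>i. a * u i + b * v i) = (\<lambda>j. a * mat_vec_on I M u j + b * mat_vec_on I M v j)"
    by (rule ext, rule mat_vec_on_lincomb)
  then show ?thesis
    by (simp add: inner_on_lincomb_left inner_on_lincomb_right algebra_simps power2_eq_square)
qed

lemma sq_norm_on_lincomb:
  "sq_norm_on I (\<lambda>i. a * u i + b * v i) =
   a\<^sup>2 * sq_norm_on I u + 2 * a * b * inner_on I u v + b\<^sup>2 * sq_norm_on I v"
  unfolding sq_norm_on_def inner_on_lincomb_left inner_on_lincomb_right
  by (simp add: inner_on_commute algebra_simps power2_eq_square)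

lemma sq_norm_on_le_sum_abs_power2:
  assumes "finite I"
  shows "sq_norm_on I v \<le> (\<Sum>i\<in>I. \<bar>v i\<bar>)\<^sup>2"
proof -
  have "sq_norm_on I v = (\<Sum>i\<in>I. \<bar>v i\<bar> * \<bar>v i\<bar>)"
    unfolding sq_norm_on_def inner_on_def by simp
  also have "\<dots> \<le> (\<Sum>i\<in>I. \<bar>v i\<bar> * (\<Sum>j\<in>I. \<bar>v j\<bar>))"
    by (intro sum_mono mult_left_mono member_le_sum) (use assms in auto)
  also have "\<dots> = (\<Sum>i\<in>I. \<bar>v i\<bar>)\<^sup>2" by (simp add: sum_distrib_right[symmetric] power2_eq_square)
  finally show ?thesis .
qed

text \<open>A symmetric \<open>M\<close> with \<open>0 \<le> M \<le> \<beta>\<close> in the Loewner order has operator norm at most \<open>\<beta>\<close>: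
  compare the quadratic forms of \<open>M v \<plusminus> \<beta> v\<close>.\<close>
lemma sq_norm_on_mat_vec_on_le:
  assumes sym: "symmetric_on I M" and "0 < \<beta>"
    and psd: "\<And>v. 0 \<le> inner_on I v (mat_vec_on I M v)"
    and upper: "\<And>v. inner_on I v (mat_vec_on I M v) \<le> \<beta> * sq_norm_on I v"
  shows "sq_norm_on I (mat_vec_on I M v) \<le> \<beta>\<^sup>2 * sq_norm_on I v"
proof -
  define u where "u = mat_vec_on I M v"
  define a where "a = sq_norm_on I u"
  define b where "b = sq_norm_on I v"
  define c where "c = inner_on I u v"
  define d where "d = inner_on I v (mat_vec_on I M v)"
  define e where "e = inner_on I u (mat_vec_on I M u)"
  have cross: "inner_on I v (mat_vec_on I M u) = a" "inner_on I u (mat_vec_on I M v) = a"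
    using inner_on_mat_vec_on_symmetric[OF sym, of v u]
    unfolding a_def sq_norm_on_def u_def by (simp_all add: inner_on_commute)
  have "e + 2 * \<beta> * a + \<beta>\<^sup>2 * d \<le> \<beta> * (a + 2 * \<beta> * c + \<beta>\<^sup>2 * b)"
    using upper[of "\<lambda>i. 1 * u i + \<beta> * v i"]
    unfolding quad_form_lincomb sq_norm_on_lincomb cross a_def b_def c_def d_def e_def by simp
  moreover have "0 \<le> e - 2 * \<beta> * a + \<beta>\<^sup>2 * d"
    using psd[of "\<lambda>i. 1 * u i + (-\<beta>) * v i"] unfolding quad_form_lincomb cross d_def e_def by simp
  moreover have "0 \<le> \<beta> * (a - 2 * \<beta> * c + \<beta>\<^sup>2 * b)"
    using sq_norm_on_nonneg[of I "\<lambda>i. 1 * u i + (-\<beta>) * v i"] \<open>0 < \<beta>\<close>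
    unfolding sq_norm_on_lincomb a_def b_def c_def by simp
  ultimately have "\<beta> * (2 * a) \<le> \<beta> * (2 * \<beta>\<^sup>2 * b)"
    by (simp add: algebra_simps)
  then have "a \<le> \<beta>\<^sup>2 * b" using \<open>0 < \<beta>\<close> by simp
  then show ?thesis unfolding a_def b_def u_def .
qed

lemma quad_form_le_sum_abs:
  assumes "finite I"
  shows "inner_on I v (mat_vec_on I M v) \<le> (\<Sum>i\<in>I. \<Sum>j\<in>I. \<bar>M i j\<bar>) * sq_norm_on I v"
proof -
  have abs_prod: "\<bar>v i * v j\<bar> \<le> sq_norm_on I v" if "i \<in> I" "j \<in> I" for i j
  proof -
    have "2 * \<bar>v i * v j\<bar> \<le> (v i)\<^sup>2 + (v j)\<^sup>2"
      using sum_squares_bound[of "\<bar>v i\<bar>" "\<bar>v j\<bar>"] by (simp add: abs_mult)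
    then show ?thesis
      using power2_le_sq_norm_on[OF assms that(1), of v] power2_le_sq_norm_on[OF assms that(2), of v]
      by linarith
  qed
  have "inner_on I v (mat_vec_on I M v) = (\<Sum>i\<in>I. \<Sum>j\<in>I. M i j * (v i * v j))"
    unfolding quad_form_eq_inner_on[symmetric] by (simp add: algebra_simps)
  also have "\<dots> \<le> (\<Sum>i\<in>I. \<Sum>j\<in>I. \<bar>M i j\<bar> * sq_norm_on I v)"
  proof (intro sum_mono)
    fix i j assume "i \<in> I" "j \<in> I"
    have "M i j * (v i * v j) \<le> \<bar>M i j\<bar> * \<bar>v i * v j\<bar>"
      by (metis abs_ge_self abs_mult)
    also have "\<dots> \<le> \<bar>M i j\<bar> * sq_norm_on I v"
      by (rule mult_left_mono[OF abs_prod[OF \<open>i \<in> I\<close> \<open>j \<in> I\<close>]]) simp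
    finally show "M i j * (v i * v j) \<le> \<bar>M i j\<bar> * sq_norm_on I v" .
  qed
  also have "\<dots> = (\<Sum>i\<in>I. \<Sum>j\<in>I. \<bar>M i j\<bar>) * sq_norm_on I v"
    by (simp add: sum_distrib_right)
  finally show ?thesis .
qed

lemma mat_mult_on_transpose:
  assumes "symmetric_on I L" "symmetric_on I M" "i \<in> I" "j \<in> I"
  shows "mat_mult_on I L M i j = mat_mult_on I M L j i"
  using assms unfolding mat_mult_on_def symmetric_on_def
  by (intro sum.cong refl) (auto simp: mult.commute)

lemma symmetric_on_mat_mult_on_self: "symmetric_on I M \<Longrightarrow> symmetric_on I (mat_mult_on I M M)"
  using mat_mult_on_transpose[of I M M] unfolding symmetric_on_def by blast

fun mat_pow_on :: "nat set \<Rightarrow> (nat \<Rightarrow> nat \<Rightarrow> real) \<Rightarrow> nat \<Rightarrow> nat \<Rightarrow> nat \<Rightarrow> real" where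
  "mat_pow_on I B 0 = id_mat"
| "mat_pow_on I B (Suc j) = mat_mult_on I B (mat_pow_on I B j)"

lemma mat_pow_on_add:
  assumes "finite I" "i \<in> I"
  shows "mat_mult_on I (mat_pow_on I B a) (mat_pow_on I B b) i m = mat_pow_on I B (a + b) i m"
  using assms(2)
proof (induction a arbitrary: i)
  case 0
  then show ?case using mat_mult_on_id_left[OF assms(1)] by simp
next
  case (Suc a)
  have "mat_mult_on I (mat_pow_on I B (Suc a)) (mat_pow_on I B b) i m
      = mat_mult_on I B (mat_mult_on I (mat_pow_on I B a) (mat_pow_on I B b)) i m"
    by (simp add: mat_mult_on_assoc)
  also have "\<dots> = mat_pow_on I B (Suc a + b) i m"
    by (simp add: Suc.IH cong: mat_mult_on_cong)
  finally show ?case .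
qed

lemma mat_pow_on_Suc_right:
  assumes "finite I" "i \<in> I" "m \<in> I"
  shows "mat_mult_on I (mat_pow_on I B j) B i m = mat_pow_on I B (Suc j) i m"
proof -
  have "mat_mult_on I (mat_pow_on I B j) B i m = mat_mult_on I (mat_pow_on I B j) (mat_pow_on I B 1) i m"
    using mat_mult_on_id_right[OF assms(1,3)] by (intro mat_mult_on_cong) auto
  also have "\<dots> = mat_pow_on I B (j + 1) i m" by (rule mat_pow_on_add[OF assms(1,2)])
  finally show ?thesis by simp
qed

lemma symmetric_on_mat_pow_on:
  assumes "finite I" "symmetric_on I B"
  shows "symmetric_on I (mat_pow_on I B j)"
proof (induction j)
  case 0
  then show ?case by (simp add: symmetric_on_def id_mat_def)
next
  case (Suc j)
  show ?case unfolding symmetric_on_def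
  proof (intro ballI)
    fix i m assume "i \<in> I" "m \<in> I"
    have "mat_pow_on I B (Suc j) i m = mat_mult_on I (mat_pow_on I B j) B m i"
      using mat_mult_on_transpose[OF assms(2) Suc \<open>i \<in> I\<close> \<open>m \<in> I\<close>] by simp
    also have "\<dots> = mat_pow_on I B (Suc j) m i"
      by (rule mat_pow_on_Suc_right) (use assms \<open>i \<in> I\<close> \<open>m \<in> I\<close> in auto)
    finally show "mat_pow_on I B (Suc j) i m = mat_pow_on I B (Suc j) m i" .
  qed
qed


lemma mat_pow_on_commute:
  assumes "finite I"
    and comm: "\<And>i m. i \<in> I \<Longrightarrow> m \<in> I \<Longrightarrow> mat_mult_on I N B i m = mat_mult_on I B N i m"
    and "i \<in> I" "m \<in> I"
  shows "mat_mult_on I N (mat_pow_on I B j) i m = mat_mult_on I (mat_pow_on I B j) N i m"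
  using assms(3,4)
proof (induction j arbitrary: i m)
  case 0
  then show ?case using mat_mult_on_id_left[OF assms(1)] mat_mult_on_id_right[OF assms(1)] by simp
next
  case (Suc j)
  have "mat_mult_on I N (mat_pow_on I B (Suc j)) i m
      = mat_mult_on I (mat_mult_on I N B) (mat_pow_on I B j) i m"
    by (simp add: mat_mult_on_assoc)
  also have "\<dots> = mat_mult_on I (mat_mult_on I B N) (mat_pow_on I B j) i m"
    by (rule mat_mult_on_cong) (use comm Suc.prems in auto)
  also have "\<dots> = mat_mult_on I B (mat_mult_on I (mat_pow_on I B j) N) i m"
    unfolding mat_mult_on_assoc by (rule mat_mult_on_cong) (use Suc in auto)
  also have "\<dots> = mat_mult_on I (mat_pow_on I B (Suc j)) N i m"
    by (simp add: mat_mult_on_assoc)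
  finally show ?case .
qed

lemma quad_form_mat_pow_on_nonneg:
  assumes "finite I" and sym: "symmetric_on I B"
    and psd: "\<And>v. 0 \<le> inner_on I v (mat_vec_on I B v)"
  shows "0 \<le> inner_on I v (mat_vec_on I (mat_pow_on I B j) v)"
proof (induction j arbitrary: v rule: nat_induct2)
  case 0
  then show ?case using inner_on_mat_vec_on_id[OF assms(1)] sq_norm_on_nonneg by simp
next
  case 1
  have "mat_vec_on I (mat_pow_on I B 1) v i = mat_vec_on I B v i" if "i \<in> I" for i
    by (rule mat_vec_on_cong) (simp_all add: mat_mult_on_id_right[OF assms(1)])
  then have "inner_on I v (mat_vec_on I (mat_pow_on I B 1) v) = inner_on I v (mat_vec_on I B v)"
    by (intro inner_on_cong) auto
  then show ?case using psd by simp
next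
  case (step j)
  have "mat_vec_on I (mat_pow_on I B (j + 2)) v i
      = mat_vec_on I B (mat_vec_on I (mat_pow_on I B j) (mat_vec_on I B v)) i" if "i \<in> I" for i
  proof -
    have "mat_vec_on I (mat_pow_on I B (j + 2)) v i
        = mat_vec_on I B (mat_vec_on I (mat_mult_on I (mat_pow_on I B j) B) v) i"
      using mat_pow_on_Suc_right[OF assms(1)]
      by (simp add: mat_vec_on_mat_mult_on cong: mat_vec_on_cong)
    then show ?thesis by (simp add: mat_vec_on_mat_mult_on cong: mat_vec_on_cong)
  qed
  then have "inner_on I v (mat_vec_on I (mat_pow_on I B (j + 2)) v)
      = inner_on I v (mat_vec_on I B (mat_vec_on I (mat_pow_on I B j) (mat_vec_on I B v)))"
    by (intro inner_on_cong) auto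
  also have "\<dots> = inner_on I (mat_vec_on I B v) (mat_vec_on I (mat_pow_on I B j) (mat_vec_on I B v))"
    by (rule inner_on_mat_vec_on_symmetric[OF sym])
  finally show ?case using step by simp
qed

lemma abs_mat_pow_on_le:
  assumes "finite I" "symmetric_on I B" "0 < \<beta>"
    and "\<And>v. 0 \<le> inner_on I v (mat_vec_on I B v)"
    and "\<And>v. inner_on I v (mat_vec_on I B v) \<le> \<beta> * sq_norm_on I v"
    and "i \<in> I" "l \<in> I"
  shows "\<bar>mat_pow_on I B j i l\<bar> \<le> \<beta> ^ j"
proof -
  have column: "sq_norm_on I (\<lambda>i. mat_pow_on I B j i l) \<le> (\<beta>\<^sup>2) ^ j"
  proof (induction j)
    case 0
    then show ?case using sq_norm_on_column_id_mat[OF assms(1,7)] by simp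
  next
    case (Suc j)
    have "(\<lambda>i. mat_pow_on I B (Suc j) i l) = mat_vec_on I B (\<lambda>i. mat_pow_on I B j i l)"
      by (rule ext) (simp add: mat_mult_on_def mat_vec_on_def)
    then have "sq_norm_on I (\<lambda>i. mat_pow_on I B (Suc j) i l) \<le> \<beta>\<^sup>2 * sq_norm_on I (\<lambda>i. mat_pow_on I B j i l)"
      using sq_norm_on_mat_vec_on_le[OF assms(2-5)] by simp
    also have "\<dots> \<le> (\<beta>\<^sup>2) ^ Suc j"
      using Suc by (simp add: mult_left_mono)
    finally show ?case .
  qed
  have "(mat_pow_on I B j i l)\<^sup>2 \<le> (\<beta> ^ j)\<^sup>2"
    using power2_le_sq_norm_on[OF assms(1,6), of "\<lambda>i. mat_pow_on I B j i l"] column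
    by (simp add: power_mult[symmetric] power_mult_distrib mult.commute)
  then show ?thesis using abs_le_square_iff[of "mat_pow_on I B j i l" "\<beta> ^ j"] \<open>0 < \<beta>\<close> by simp
qed

section \<open>The inverse square root\<close>

text \<open>The Taylor coefficients of \<open>(1 - z)\<^sup>-\<^sup>1\<^sup>/\<^sup>2\<close>.\<close>
definition inv_sqrt_coeff :: "nat \<Rightarrow> real" where
  "inv_sqrt_coeff j = (-1) ^ j * ((-1/2 :: real) gchoose j)"

lemma inv_sqrt_coeff_0 [simp]: "inv_sqrt_coeff 0 = 1"
  by (simp add: inv_sqrt_coeff_def)

lemma inv_sqrt_coeff_Suc: "inv_sqrt_coeff (Suc j) = inv_sqrt_coeff j * ((real j + 1/2) / (real j + 1))"
proof -
  define G where "G = ((-1/2::real) gchoose j)"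
  define G' where "G' = ((-1/2::real) gchoose (Suc j))"
  have "(-1/2::real) * G = real j * G + real (Suc j) * G'"
    unfolding G_def G'_def by (rule gbinomial_mult_1)
  then have G': "(real j + 1) * G' = (-1/2 - real j) * G"
    by (auto simp: algebra_simps)
  have "(real j + 1) * inv_sqrt_coeff (Suc j) = - ((-1) ^ j * ((real j + 1) * G'))"
    by (simp add: inv_sqrt_coeff_def G'_def algebra_simps)
  also have "\<dots> = (real j + 1/2) * inv_sqrt_coeff j"
    unfolding G' by (simp add: inv_sqrt_coeff_def G_def algebra_simps)
  finally show ?thesis by (simp add: field_simps)
qed

lemma inv_sqrt_coeff_bounds: "0 \<le> inv_sqrt_coeff j \<and> inv_sqrt_coeff j \<le> 1"
proof (induction j)
  case (Suc j)
  have q: "0 \<le> (real j + 1/2) / (real j + 1)" "(real j + 1/2) / (real j + 1) \<le> 1"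
    by (auto simp: divide_simps)
  have "inv_sqrt_coeff j * ((real j + 1/2) / (real j + 1)) \<le> 1"
    by (rule mult_le_one) (use Suc q in auto)
  then show ?case using Suc q unfolding inv_sqrt_coeff_Suc by simp
qed simp

text \<open>\<open>(1 - z)\<^sup>-\<^sup>1\<^sup>/\<^sup>2 \<cdot> (1 - z)\<^sup>-\<^sup>1\<^sup>/\<^sup>2 = (1 - z)\<^sup>-\<^sup>1\<close>, via Vandermonde's identity.\<close>
lemma inv_sqrt_coeff_convolution: "(\<Sum>a\<le>j. inv_sqrt_coeff a * inv_sqrt_coeff (j - a)) = 1"
proof -
  have "(\<Sum>a\<le>j. inv_sqrt_coeff a * inv_sqrt_coeff (j - a))
      = (-1) ^ j * (\<Sum>a\<in>{0..j}. ((-1/2::real) gchoose a) * ((-1/2) gchoose (j - a)))"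
    unfolding atLeast0AtMost inv_sqrt_coeff_def sum_distrib_left
    by (intro sum.cong refl) (auto simp: power_add[symmetric])
  also have "\<dots> = (-1) ^ j * ((-1::real) gchoose j)"
    by (simp add: gbinomial_Vandermonde)
  also have "((-1::real) gchoose j) = (-1) ^ j"
    using gbinomial_minus[of "1::real" j] binomial_gbinomial[of j j] by simp
  finally show ?thesis by (simp add: power_mult_distrib[symmetric])
qed

lemma sum_mult_suminf:
  fixes f :: "'a \<Rightarrow> nat \<Rightarrow> real"
  assumes "\<And>l. l \<in> I \<Longrightarrow> summable (f l)"
  shows "(\<Sum>l\<in>I. a l * suminf (f l)) = (\<Sum>j. \<Sum>l\<in>I. a l * f l j)"
    and "(\<Sum>l\<in>I. suminf (f l) * a l) = (\<Sum>j. \<Sum>l\<in>I. f l j * a l)"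
  using assms by (simp_all add: suminf_mult[symmetric] suminf_mult2 suminf_sum summable_mult summable_mult2)

locale loewner_contraction =
  fixes I :: "nat set" and B :: "nat \<Rightarrow> nat \<Rightarrow> real" and \<beta> :: real
  assumes finite: "finite I" and symmetric: "symmetric_on I B"
    and pos: "0 < \<beta>" and less_one: "\<beta> < 1"
    and psd: "\<And>v. 0 \<le> inner_on I v (mat_vec_on I B v)"
    and bounded: "\<And>v. inner_on I v (mat_vec_on I B v) \<le> \<beta> * sq_norm_on I v"
begin

lemma summable_abs_coeff_mat_pow_on:
  assumes "i \<in> I" "l \<in> I" and coeff: "\<And>j. \<bar>c j\<bar> \<le> 1"
  shows "summable (\<lambda>j. \<bar>c j * mat_pow_on I B j i l\<bar>)"
proof (rule summable_comparison_test')
  show "summable (\<lambda>j. \<beta> ^ j)" using pos less_one by (intro summable_geometric) auto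
  fix j
  have "\<bar>c j\<bar> * \<bar>mat_pow_on I B j i l\<bar> \<le> 1 * \<beta> ^ j"
    using abs_mat_pow_on_le[OF finite symmetric pos psd bounded assms(1,2)] coeff
    by (intro mult_mono) auto
  then show "norm \<bar>c j * mat_pow_on I B j i l\<bar> \<le> \<beta> ^ j" by (simp add: abs_mult)
qed

lemma summable_coeff_mat_pow_on:
  "i \<in> I \<Longrightarrow> l \<in> I \<Longrightarrow> (\<And>j. \<bar>c j\<bar> \<le> 1) \<Longrightarrow> summable (\<lambda>j. c j * mat_pow_on I B j i l)"
  by (rule summable_rabs_cancel, rule summable_abs_coeff_mat_pow_on)

lemma summable_mat_pow_on: "i \<in> I \<Longrightarrow> l \<in> I \<Longrightarrow> summable (\<lambda>j. mat_pow_on I B j i l)"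
  using summable_coeff_mat_pow_on[of i l "\<lambda>_. 1"] by simp

lemma summable_abs_inv_sqrt_coeff_mat_pow_on:
  "i \<in> I \<Longrightarrow> l \<in> I \<Longrightarrow> summable (\<lambda>j. \<bar>inv_sqrt_coeff j * mat_pow_on I B j i l\<bar>)"
  using inv_sqrt_coeff_bounds by (intro summable_abs_coeff_mat_pow_on) auto

lemma summable_inv_sqrt_coeff_mat_pow_on:
  "i \<in> I \<Longrightarrow> l \<in> I \<Longrightarrow> summable (\<lambda>j. inv_sqrt_coeff j * mat_pow_on I B j i l)"
  by (rule summable_rabs_cancel, rule summable_abs_inv_sqrt_coeff_mat_pow_on)

lemma neumann_series:
  assumes "i \<in> I" "m \<in> I"
  shows "(\<Sum>l\<in>I. (\<Sum>j. mat_pow_on I B j i l) * (id_mat l m - B l m)) = id_mat i m"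
proof -
  have "(\<Sum>l\<in>I. (\<Sum>j. mat_pow_on I B j i l) * (id_mat l m - B l m))
      = (\<Sum>j. \<Sum>l\<in>I. mat_pow_on I B j i l * (id_mat l m - B l m))"
    using summable_mat_pow_on assms by (intro sum_mult_suminf) auto
  also have "\<dots> = (\<Sum>j. mat_pow_on I B j i m - mat_pow_on I B (Suc j) i m)"
  proof (rule arg_cong[where f = suminf], rule ext)
    fix j
    have "(\<Sum>l\<in>I. mat_pow_on I B j i l * (id_mat l m - B l m))
        = mat_mult_on I (mat_pow_on I B j) id_mat i m - mat_mult_on I (mat_pow_on I B j) B i m"
      by (simp add: mat_mult_on_def algebra_simps sum_subtractf)
    then show "(\<Sum>l\<in>I. mat_pow_on I B j i l * (id_mat l m - B l m))
        = mat_pow_on I B j i m - mat_pow_on I B (Suc j) i m"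
      using mat_mult_on_id_right[OF finite assms(2)] mat_pow_on_Suc_right[OF finite assms] by simp
  qed
  also have "\<dots> = mat_pow_on I B 0 i m"
    using telescope_sums'[OF summable_LIMSEQ_zero[OF summable_mat_pow_on[OF assms]]]
    by (simp add: sums_iff)
  finally show ?thesis by simp
qed

definition inv_sqrt_series :: "nat \<Rightarrow> nat \<Rightarrow> real" where
  "inv_sqrt_series i l = (\<Sum>j. inv_sqrt_coeff j * mat_pow_on I B j i l)"

lemma symmetric_on_inv_sqrt_series: "symmetric_on I inv_sqrt_series"
  using symmetric_on_mat_pow_on[OF finite symmetric, unfolded symmetric_on_def]
  unfolding symmetric_on_def inv_sqrt_series_def by simp

lemma summable_mat_vec_on_mat_pow_on:
  "i \<in> I \<Longrightarrow> summable (\<lambda>j. inv_sqrt_coeff j * mat_vec_on I (mat_pow_on I B j) v i)"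
  unfolding mat_vec_on_def sum_distrib_left mult.assoc[symmetric]
  using summable_inv_sqrt_coeff_mat_pow_on by (intro summable_sum summable_mult2) auto

lemma mat_vec_on_inv_sqrt_series:
  assumes "i \<in> I"
  shows "mat_vec_on I inv_sqrt_series v i = (\<Sum>j. inv_sqrt_coeff j * mat_vec_on I (mat_pow_on I B j) v i)"
proof -
  have "mat_vec_on I inv_sqrt_series v i = (\<Sum>j. \<Sum>l\<in>I. inv_sqrt_coeff j * mat_pow_on I B j i l * v l)"
    unfolding mat_vec_on_def inv_sqrt_series_def
    using summable_inv_sqrt_coeff_mat_pow_on assms
    by (intro sum_mult_suminf) auto
  then show ?thesis by (simp add: mat_vec_on_def sum_distrib_left mult.assoc)
qed

lemma sq_norm_on_le_inv_sqrt_series: "sq_norm_on I v \<le> inner_on I v (mat_vec_on I inv_sqrt_series v)"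
proof -
  have "inner_on I v (mat_vec_on I inv_sqrt_series v)
      = (\<Sum>i\<in>I. v i * (\<Sum>j. inv_sqrt_coeff j * mat_vec_on I (mat_pow_on I B j) v i))"
    unfolding inner_on_def by (intro sum.cong refl) (simp add: mat_vec_on_inv_sqrt_series)
  also have "\<dots> = (\<Sum>j. inv_sqrt_coeff j * inner_on I v (mat_vec_on I (mat_pow_on I B j) v))"
    using summable_mat_vec_on_mat_pow_on
    by (subst sum_mult_suminf) (auto simp: inner_on_def sum_distrib_left mult.left_commute)
  finally have series: "inner_on I v (mat_vec_on I inv_sqrt_series v)
      = (\<Sum>j. inv_sqrt_coeff j * inner_on I v (mat_vec_on I (mat_pow_on I B j) v))" .
  have "summable (\<lambda>j. \<Sum>i\<in>I. v i * (inv_sqrt_coeff j * mat_vec_on I (mat_pow_on I B j) v i))"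
    using summable_mat_vec_on_mat_pow_on by (intro summable_sum summable_mult) auto
  then have "summable (\<lambda>j. inv_sqrt_coeff j * inner_on I v (mat_vec_on I (mat_pow_on I B j) v))"
    by (simp add: inner_on_def sum_distrib_left mult.left_commute)
  then have "(\<Sum>j\<in>{0}. inv_sqrt_coeff j * inner_on I v (mat_vec_on I (mat_pow_on I B j) v))
      \<le> inner_on I v (mat_vec_on I inv_sqrt_series v)"
    unfolding series using inv_sqrt_coeff_bounds quad_form_mat_pow_on_nonneg[OF finite symmetric psd]
    by (intro sum_le_suminf) auto
  then show ?thesis by (simp add: inner_on_mat_vec_on_id[OF finite])
qed

lemma pos_def_on_inv_sqrt_series_scaled:
  assumes "0 < c"
  shows "pos_def_on I (\<lambda>i j. if i \<in> I \<and> j \<in> I then inv_sqrt_series i j / c else 0)"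
  unfolding pos_def_on_def
proof (intro conjI allI impI)
  show "\<forall>i\<in>I. \<forall>j\<in>I. (if i \<in> I \<and> j \<in> I then inv_sqrt_series i j / c else 0)
                     = (if j \<in> I \<and> i \<in> I then inv_sqrt_series j i / c else 0)"
    using symmetric_on_inv_sqrt_series unfolding symmetric_on_def by simp
  fix v :: "nat \<Rightarrow> real" assume "\<exists>i\<in>I. v i \<noteq> 0"
  then have "0 < sq_norm_on I v / c" using sq_norm_on_pos[OF finite] \<open>0 < c\<close> by auto
  also have "\<dots> \<le> inner_on I v (mat_vec_on I inv_sqrt_series v) / c"
    using sq_norm_on_le_inv_sqrt_series \<open>0 < c\<close> by (simp add: divide_right_mono)
  also have "\<dots> = (\<Sum>i\<in>I. \<Sum>j\<in>I. v i * (if i \<in> I \<and> j \<in> I then inv_sqrt_series i j / c else 0) * v j)"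
    unfolding quad_form_eq_inner_on inner_on_def mat_vec_on_def
    by (simp add: sum_divide_distrib sum_distrib_left)
  finally show "0 < (\<Sum>i\<in>I. \<Sum>j\<in>I. v i * (if i \<in> I \<and> j \<in> I then inv_sqrt_series i j / c else 0) * v j)" .
qed

lemma inv_sqrt_series_commute:
  assumes comm: "\<And>i m. i \<in> I \<Longrightarrow> m \<in> I \<Longrightarrow> mat_mult_on I N B i m = mat_mult_on I B N i m"
    and "i \<in> I" "m \<in> I"
  shows "mat_mult_on I N inv_sqrt_series i m = mat_mult_on I inv_sqrt_series N i m"
proof -
  have "mat_mult_on I N inv_sqrt_series i m = (\<Sum>j. \<Sum>l\<in>I. N i l * (inv_sqrt_coeff j * mat_pow_on I B j l m))"
    unfolding mat_mult_on_def inv_sqrt_series_def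
    using summable_inv_sqrt_coeff_mat_pow_on assms(3)
    by (intro sum_mult_suminf) auto
  also have "\<dots> = (\<Sum>j. inv_sqrt_coeff j * mat_mult_on I N (mat_pow_on I B j) i m)"
    by (simp add: mat_mult_on_def sum_distrib_left mult.left_commute)
  also have "\<dots> = (\<Sum>j. inv_sqrt_coeff j * mat_mult_on I (mat_pow_on I B j) N i m)"
    using mat_pow_on_commute[OF finite comm assms(2,3)] by simp
  also have "\<dots> = (\<Sum>j. \<Sum>l\<in>I. (inv_sqrt_coeff j * mat_pow_on I B j i l) * N l m)"
    by (simp add: mat_mult_on_def sum_distrib_left mult.assoc)
  also have "\<dots> = mat_mult_on I inv_sqrt_series N i m"
    unfolding mat_mult_on_def inv_sqrt_series_def
    using summable_inv_sqrt_coeff_mat_pow_on assms(2)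
    by (intro sum_mult_suminf[symmetric]) auto
  finally show ?thesis .
qed

lemma inv_sqrt_series_square:
  assumes "i \<in> I" "m \<in> I"
  shows "mat_mult_on I inv_sqrt_series inv_sqrt_series i m = (\<Sum>j. mat_pow_on I B j i m)"
proof -
  let ?term = "\<lambda>l j. \<Sum>a\<le>j. (inv_sqrt_coeff a * mat_pow_on I B a i l)
                          * (inv_sqrt_coeff (j - a) * mat_pow_on I B (j - a) l m)"
  have product: "inv_sqrt_series i l * inv_sqrt_series l m = (\<Sum>j. ?term l j)"
    and summable: "summable (?term l)" if "l \<in> I" for l
    unfolding inv_sqrt_series_def
    using summable_abs_inv_sqrt_coeff_mat_pow_on assms that
    by (auto intro!: Cauchy_product summable_Cauchy_product)
  have "mat_mult_on I inv_sqrt_series inv_sqrt_series i m = (\<Sum>j. \<Sum>l\<in>I. ?term l j)"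
    unfolding mat_mult_on_def using product summable by (simp add: suminf_sum)
  also have "\<dots> = (\<Sum>j. mat_pow_on I B j i m)"
  proof (rule arg_cong[where f = suminf], rule ext)
    fix j
    have "(\<Sum>l\<in>I. ?term l j)
        = (\<Sum>a\<le>j. (inv_sqrt_coeff a * inv_sqrt_coeff (j - a))
                   * mat_mult_on I (mat_pow_on I B a) (mat_pow_on I B (j - a)) i m)"
      unfolding mat_mult_on_def by (subst sum.swap) (simp add: sum_distrib_left algebra_simps)
    also have "\<dots> = (\<Sum>a\<le>j. inv_sqrt_coeff a * inv_sqrt_coeff (j - a)) * mat_pow_on I B j i m"
      by (simp add: mat_pow_on_add[OF finite assms(1)] sum_distrib_right)
    finally show "(\<Sum>l\<in>I. ?term l j) = mat_pow_on I B j i m"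
      by (simp add: inv_sqrt_coeff_convolution)
  qed
  finally show ?thesis .
qed

end

lemma loewner_contraction_rescaled:
  assumes "finite I" "symmetric_on I Q" "0 < \<mu>" "\<mu> < s" "(\<Sum>i\<in>I. \<Sum>j\<in>I. \<bar>Q i j\<bar>) \<le> s"
    and lower: "\<And>v. \<mu> * sq_norm_on I v \<le> inner_on I v (mat_vec_on I Q v)"
  shows "loewner_contraction I (\<lambda>i j. id_mat i j - Q i j / s) (1 - \<mu> / s)"
proof
  let ?B = "\<lambda>i j. id_mat i j - Q i j / s"
  have "0 < s" using assms(3,4) by linarith
  have quad: "inner_on I v (mat_vec_on I ?B v) = sq_norm_on I v - inner_on I v (mat_vec_on I Q v) / s" for v
  proof -
    have row: "mat_vec_on I ?B v i = v i - mat_vec_on I Q v i / s" if "i \<in> I" for i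
      using mat_vec_on_id[OF assms(1) that, of v]
      by (simp add: mat_vec_on_def left_diff_distrib sum_subtractf sum_divide_distrib)
    have "inner_on I v (mat_vec_on I ?B v) = (\<Sum>i\<in>I. v i * v i - v i * mat_vec_on I Q v i / s)"
      unfolding inner_on_def by (intro sum.cong refl) (simp add: row right_diff_distrib)
    then show ?thesis unfolding sq_norm_on_def inner_on_def by (simp add: sum_subtractf sum_divide_distrib)
  qed
  show "finite I" by fact
  show "symmetric_on I ?B" using assms(2) unfolding symmetric_on_def id_mat_def by auto
  show "0 < 1 - \<mu> / s" "1 - \<mu> / s < 1" using assms(3,4) \<open>0 < s\<close> by simp_all
  show "0 \<le> inner_on I v (mat_vec_on I ?B v)" for v
  proof -
    have "inner_on I v (mat_vec_on I Q v) \<le> s * sq_norm_on I v"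
      using quad_form_le_sum_abs[OF assms(1), of v Q] assms(5) sq_norm_on_nonneg[of I v]
      by (meson mult_right_mono order_trans)
    then show ?thesis unfolding quad using \<open>0 < s\<close> by (simp add: divide_simps mult.commute)
  qed
  show "inner_on I v (mat_vec_on I ?B v) \<le> (1 - \<mu> / s) * sq_norm_on I v" for v
    unfolding quad using divide_right_mono[OF lower[of v], of s] \<open>0 < s\<close> by (simp add: algebra_simps)
qed

lemma mat_mult_on_commute_id_minus:
  assumes "finite I"
    and comm: "\<And>i j. i \<in> I \<Longrightarrow> j \<in> I \<Longrightarrow> mat_mult_on I N Q i j = mat_mult_on I Q N i j"
    and "i \<in> I" "j \<in> I"
  shows "mat_mult_on I N (\<lambda>i j. id_mat i j - Q i j / s) i j = mat_mult_on I (\<lambda>i j. id_mat i j - Q i j / s) N i j"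
proof -
  have "mat_mult_on I N (\<lambda>i j. id_mat i j - Q i j / s) i j = mat_mult_on I N id_mat i j - mat_mult_on I N Q i j / s"
    unfolding mat_mult_on_def by (simp add: algebra_simps sum_subtractf sum_divide_distrib)
  also have "\<dots> = mat_mult_on I id_mat N i j - mat_mult_on I Q N i j / s"
    using mat_mult_on_id_right[OF assms(1,4)] mat_mult_on_id_left[OF assms(1,3)] comm assms(3,4) by simp
  also have "\<dots> = mat_mult_on I (\<lambda>i j. id_mat i j - Q i j / s) N i j"
    unfolding mat_mult_on_def by (simp add: algebra_simps sum_subtractf sum_divide_distrib)
  finally show ?thesis .
qed

lemma exists_inv_sqrt_on:
  assumes fin: "finite I" and "symmetric_on I Q" and "0 < \<mu>"
    and "\<And>v. \<mu> * sq_norm_on I v \<le> inner_on I v (mat_vec_on I Q v)"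
  obtains M where "\<And>i j. i \<notin> I \<or> j \<notin> I \<Longrightarrow> M i j = 0" and "pos_def_on I M"
    and "\<And>i j. i \<in> I \<Longrightarrow> j \<in> I \<Longrightarrow> mat_mult_on I (mat_mult_on I M M) Q i j = id_mat i j"
    and "\<And>N i j. (\<And>i j. i \<in> I \<Longrightarrow> j \<in> I \<Longrightarrow> mat_mult_on I N Q i j = mat_mult_on I Q N i j) \<Longrightarrow>
           i \<in> I \<Longrightarrow> j \<in> I \<Longrightarrow> mat_mult_on I N M i j = mat_mult_on I M N i j"
proof -
  define s where "s = (\<Sum>i\<in>I. \<Sum>j\<in>I. \<bar>Q i j\<bar>) + \<mu> + 1"
  define B where "B = (\<lambda>i j. id_mat i j - Q i j / s)"
  have "0 \<le> (\<Sum>i\<in>I. \<Sum>j\<in>I. \<bar>Q i j\<bar>)" by (intro sum_nonneg) auto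
  then have "0 < s" "\<mu> < s" "(\<Sum>i\<in>I. \<Sum>j\<in>I. \<bar>Q i j\<bar>) \<le> s" using \<open>0 < \<mu>\<close> by (auto simp: s_def)
  interpret loewner_contraction I B "1 - \<mu> / s"
    unfolding B_def by (rule loewner_contraction_rescaled) (use assms \<open>\<mu> < s\<close> \<open>_ \<le> s\<close> in auto)
  have Q_eq: "Q i j = s * (id_mat i j - B i j)" for i j using \<open>0 < s\<close> by (simp add: B_def)
  define M where "M i j = (if i \<in> I \<and> j \<in> I then inv_sqrt_series i j / sqrt s else 0)" for i j
  have mat_mult_M: "mat_mult_on I M N i j = mat_mult_on I inv_sqrt_series N i j / sqrt s"
    and mult_mat_M: "mat_mult_on I N M i' j' = mat_mult_on I N inv_sqrt_series i' j' / sqrt s"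
    if "i \<in> I" "j' \<in> I" for N i j i' j'
    unfolding mat_mult_on_def M_def using that by (simp_all add: sum_divide_distrib)
  show thesis
  proof
    show "M i j = 0" if "i \<notin> I \<or> j \<notin> I" for i j using that by (auto simp: M_def)
    show "mat_mult_on I (mat_mult_on I M M) Q i j = id_mat i j" if "i \<in> I" "j \<in> I" for i j
    proof -
      have "mat_mult_on I (mat_mult_on I M M) Q i j
          = (\<Sum>l\<in>I. (\<Sum>n. mat_pow_on I B n i l) * (id_mat l j - B l j))"
        unfolding mat_mult_on_def[of I "mat_mult_on I M M"] Q_eq
        using \<open>0 < s\<close> \<open>i \<in> I\<close> inv_sqrt_series_square
        by (intro sum.cong refl) (simp add: mat_mult_M mult_mat_M)
      then show ?thesis using neumann_series[OF that] by simp
    qed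
    show "pos_def_on I M"
      unfolding M_def using \<open>0 < s\<close> by (intro pos_def_on_inv_sqrt_series_scaled) simp
    fix N i j
    assume comm: "\<And>i j. i \<in> I \<Longrightarrow> j \<in> I \<Longrightarrow> mat_mult_on I N Q i j = mat_mult_on I Q N i j"
      and "i \<in> I" "j \<in> I"
    have comm_B: "mat_mult_on I N B i j = mat_mult_on I B N i j" if "i \<in> I" "j \<in> I" for i j
      unfolding B_def using mat_mult_on_commute_id_minus[OF fin comm that] .
    show "mat_mult_on I N M i j = mat_mult_on I M N i j"
      using inv_sqrt_series_commute[OF comm_B \<open>i \<in> I\<close> \<open>j \<in> I\<close>] \<open>i \<in> I\<close> \<open>j \<in> I\<close>
      by (simp add: mat_mult_M mult_mat_M)
  qed
qed

lemma symmetric_on_left_inverse_right_inverse: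
  assumes "symmetric_on I X" "symmetric_on I Q"
    and "\<And>i j. i \<in> I \<Longrightarrow> j \<in> I \<Longrightarrow> mat_mult_on I X Q i j = id_mat i j"
    and "i \<in> I" "j \<in> I"
  shows "mat_mult_on I Q X i j = id_mat i j"
  using mat_mult_on_transpose[OF assms(2,1,4,5)] assms(3)[OF assms(5,4)]
  by (simp add: id_mat_def eq_commute)

lemma left_inverse_eq_right_inverse:
  assumes fin: "finite I"
    and left: "\<And>i j. i \<in> I \<Longrightarrow> j \<in> I \<Longrightarrow> mat_mult_on I X Q i j = id_mat i j"
    and right: "\<And>i j. i \<in> I \<Longrightarrow> j \<in> I \<Longrightarrow> mat_mult_on I Q Y i j = id_mat i j"
    and "i \<in> I" "j \<in> I"
  shows "X i j = Y i j"
proof -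
  have "X i j = mat_mult_on I X id_mat i j"
    using mat_mult_on_id_right[OF fin \<open>j \<in> I\<close>] by simp
  also have "\<dots> = mat_mult_on I X (mat_mult_on I Q Y) i j"
    using right \<open>j \<in> I\<close> by (intro mat_mult_on_cong) auto
  also have "\<dots> = mat_mult_on I (mat_mult_on I X Q) Y i j"
    by (simp add: mat_mult_on_assoc)
  also have "\<dots> = Y i j"
    using mat_mult_on_id_left[OF fin \<open>i \<in> I\<close>] left \<open>i \<in> I\<close> by (auto cong: mat_mult_on_cong)
  finally show ?thesis .
qed

lemma inv_square_commute:
  assumes fin: "finite I" and "symmetric_on I Q" and sym: "symmetric_on I M"
    and inv: "\<And>i j. i \<in> I \<Longrightarrow> j \<in> I \<Longrightarrow> mat_mult_on I (mat_mult_on I M M) Q i j = id_mat i j"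
    and "i \<in> I" "m \<in> I"
  shows "mat_mult_on I Q M i m = mat_mult_on I M Q i m"
proof -
  define X where "X = mat_mult_on I M M"
  have right_inv: "mat_mult_on I Q X i j = id_mat i j" if "i \<in> I" "j \<in> I" for i j
    using symmetric_on_left_inverse_right_inverse[OF symmetric_on_mat_mult_on_self[OF sym] assms(2) inv that]
    unfolding X_def .
  have "mat_mult_on I Q M i m = mat_mult_on I (mat_mult_on I Q M) id_mat i m"
    using mat_mult_on_id_right[OF fin \<open>m \<in> I\<close>] by simp
  also have "\<dots> = mat_mult_on I (mat_mult_on I Q M) (mat_mult_on I X Q) i m"
    using inv \<open>m \<in> I\<close> unfolding X_def by (intro mat_mult_on_cong) auto
  also have "\<dots> = mat_mult_on I (mat_mult_on I (mat_mult_on I Q X) M) Q i m"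
    unfolding X_def by (simp add: mat_mult_on_assoc cong: mat_mult_on_cong)
  also have "\<dots> = mat_mult_on I M Q i m"
    using mat_mult_on_id_left[OF fin \<open>i \<in> I\<close>] right_inv \<open>i \<in> I\<close>
    by (auto cong: mat_mult_on_cong)
  finally show ?thesis .
qed

text \<open>Commuting positive definite square roots agree: with \<open>w\<close> a column of \<open>M - M'\<close>,
  \<open>(M + M') w = 0\<close>, while \<open>M + M'\<close> is positive definite.\<close>
lemma pos_def_on_sqrt_unique:
  assumes "pos_def_on I M" "pos_def_on I M'"
    and comm: "\<And>i j. i \<in> I \<Longrightarrow> j \<in> I \<Longrightarrow> mat_mult_on I M M' i j = mat_mult_on I M' M i j"
    and square: "\<And>i j. i \<in> I \<Longrightarrow> j \<in> I \<Longrightarrow> mat_mult_on I M M i j = mat_mult_on I M' M' i j"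
    and "l \<in> I" "m \<in> I"
  shows "M l m = M' l m"
proof (rule ccontr)
  assume "M l m \<noteq> M' l m"
  define w where "w p = M p m - M' p m" for p
  have "\<exists>i\<in>I. w i \<noteq> 0" using \<open>M l m \<noteq> M' l m\<close> \<open>l \<in> I\<close> unfolding w_def by auto
  then have "0 < (\<Sum>i\<in>I. \<Sum>j\<in>I. w i * M i j * w j) + (\<Sum>i\<in>I. \<Sum>j\<in>I. w i * M' i j * w j)"
    using assms(1,2) unfolding pos_def_on_def by (simp add: add_pos_pos)
  also have "\<dots> = inner_on I w (mat_vec_on I (\<lambda>i j. M i j + M' i j) w)"
    unfolding quad_form_eq_inner_on[symmetric] by (simp add: algebra_simps sum.distrib)
  also have "\<dots> = 0"
  proof -
    have "mat_vec_on I (\<lambda>i j. M i j + M' i j) w i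
        = mat_mult_on I M M i m - mat_mult_on I M' M' i m + mat_mult_on I M' M i m - mat_mult_on I M M' i m"
      for i
      unfolding mat_vec_on_def mat_mult_on_def w_def by (simp add: algebra_simps sum.distrib sum_subtractf)
    then show ?thesis unfolding inner_on_def using comm square \<open>m \<in> I\<close> by simp
  qed
  finally show False by simp
qed

lemma inv_sqrt_on_eqI:
  assumes fin: "finite I" and symQ: "symmetric_on I Q"
    and zero: "\<And>i j. i \<notin> I \<or> j \<notin> I \<Longrightarrow> M i j = 0" and pd: "pos_def_on I M"
    and inv: "\<And>i j. i \<in> I \<Longrightarrow> j \<in> I \<Longrightarrow> mat_mult_on I (mat_mult_on I M M) Q i j = id_mat i j"
    and comm: "\<And>N i j. (\<And>i j. i \<in> I \<Longrightarrow> j \<in> I \<Longrightarrow> mat_mult_on I N Q i j = mat_mult_on I Q N i j) \<Longrightarrow>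
           i \<in> I \<Longrightarrow> j \<in> I \<Longrightarrow> mat_mult_on I N M i j = mat_mult_on I M N i j"
  shows "inv_sqrt_on I Q = M"
  unfolding inv_sqrt_on_def
proof (rule the_equality)
  show "(\<forall>i j. i \<notin> I \<or> j \<notin> I \<longrightarrow> M i j = 0) \<and> pos_def_on I M \<and>
        (\<forall>i\<in>I. \<forall>j\<in>I. mat_mult_on I (mat_mult_on I M M) Q i j = (if i = j then 1 else 0))"
    using zero pd inv by (simp add: id_mat_def)
  fix M'
  assume "(\<forall>i j. i \<notin> I \<or> j \<notin> I \<longrightarrow> M' i j = 0) \<and> pos_def_on I M' \<and>
        (\<forall>i\<in>I. \<forall>j\<in>I. mat_mult_on I (mat_mult_on I M' M') Q i j = (if i = j then 1 else 0))"
  then have zero': "\<And>i j. i \<notin> I \<or> j \<notin> I \<Longrightarrow> M' i j = 0" and pd': "pos_def_on I M'"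
    and inv': "\<And>i j. i \<in> I \<Longrightarrow> j \<in> I \<Longrightarrow> mat_mult_on I (mat_mult_on I M' M') Q i j = id_mat i j"
    by (auto simp: id_mat_def)
  have sym: "symmetric_on I M" and sym': "symmetric_on I M'"
    using pd pd' unfolding pos_def_on_def symmetric_on_def by auto
  have square: "mat_mult_on I M' M' i j = mat_mult_on I M M i j" if "i \<in> I" "j \<in> I" for i j
    using left_inverse_eq_right_inverse[OF fin inv'
        symmetric_on_left_inverse_right_inverse[OF symmetric_on_mat_mult_on_self[OF sym] symQ inv] that] .
  have "mat_mult_on I M' M i j = mat_mult_on I M M' i j" if "i \<in> I" "j \<in> I" for i j
  proof (rule comm[OF _ that])
    show "mat_mult_on I M' Q i j = mat_mult_on I Q M' i j" if "i \<in> I" "j \<in> I" for i j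
      using inv_square_commute[OF fin symQ sym' inv' that] by simp
  qed
  then have "M' i j = M i j" if "i \<in> I" "j \<in> I" for i j
    using pos_def_on_sqrt_unique[OF pd' pd _ square that] by blast
  then show "M' = M" using zero zero' by (intro ext) (metis (full_types))
qed

text \<open>With \<open>u = M\<^sup>2 g\<close> one has \<open>\<parallel>M g\<parallel>\<^sup>2 = \<langle>u, g\<rangle> = \<langle>u, Q u\<rangle> \<ge> \<mu> \<parallel>u\<parallel>\<^sup>2\<close>; expanding
  \<open>0 \<le> \<parallel>\<mu> u - g\<parallel>\<^sup>2\<close> then bounds \<open>\<langle>u, g\<rangle>\<close>.\<close>
lemma sq_norm_on_mat_vec_on_inv_sqrt_le:
  assumes fin: "finite I" and sym: "symmetric_on I M" and "0 < \<mu>"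
    and lower: "\<And>v. \<mu> * sq_norm_on I v \<le> inner_on I v (mat_vec_on I Q v)"
    and right_inv: "\<And>i j. i \<in> I \<Longrightarrow> j \<in> I \<Longrightarrow> mat_mult_on I Q (mat_mult_on I M M) i j = id_mat i j"
  shows "sq_norm_on I (mat_vec_on I M g) \<le> sq_norm_on I g / \<mu>"
proof -
  define u where "u = mat_vec_on I M (mat_vec_on I M g)"
  have Qu: "mat_vec_on I Q u i = g i" if "i \<in> I" for i
  proof -
    have "mat_vec_on I Q u i = mat_vec_on I (mat_mult_on I Q (mat_mult_on I M M)) g i"
      unfolding u_def mat_vec_on_mat_mult_on ..
    also have "\<dots> = mat_vec_on I id_mat g i"
      using right_inv that by (intro mat_vec_on_cong) auto
    finally show ?thesis using mat_vec_on_id[OF fin that] by simp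
  qed
  define t where "t = inner_on I u g"
  have t_eq: "sq_norm_on I (mat_vec_on I M g) = t"
    unfolding sq_norm_on_def t_def u_def
    using inner_on_mat_vec_on_symmetric[OF sym, of "mat_vec_on I M g" g] by (simp add: inner_on_commute)
  have "\<mu> * sq_norm_on I u \<le> t"
    using lower[of u] Qu unfolding t_def by (simp cong: inner_on_cong)
  then have "\<mu>\<^sup>2 * sq_norm_on I u \<le> \<mu> * t"
    using mult_left_mono[of _ t \<mu>] \<open>0 < \<mu>\<close> by (simp add: power2_eq_square mult.assoc)
  moreover have "0 \<le> sq_norm_on I (\<lambda>i. \<mu> * u i + (-1) * g i)" by (rule sq_norm_on_nonneg)
  ultimately have "\<mu> * t \<le> sq_norm_on I g"
    unfolding sq_norm_on_lincomb t_def by simp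
  then show ?thesis using t_eq \<open>0 < \<mu>\<close> by (simp add: le_divide_eq mult.commute)
qed

lemma inv_sqrt_on_properties:
  assumes fin: "finite I" and symQ: "symmetric_on I Q" and "0 < \<mu>"
    and lower: "\<And>v. \<mu> * sq_norm_on I v \<le> inner_on I v (mat_vec_on I Q v)"
  shows "symmetric_on I (inv_sqrt_on I Q)"
    and "\<And>i j. i \<in> I \<Longrightarrow> j \<in> I \<Longrightarrow>
           mat_mult_on I (mat_mult_on I (inv_sqrt_on I Q) Q) (inv_sqrt_on I Q) i j = id_mat i j"
    and "sq_norm_on I (mat_vec_on I (inv_sqrt_on I Q) g) \<le> sq_norm_on I g / \<mu>"
proof -
  obtain M where zero: "\<And>i j. i \<notin> I \<or> j \<notin> I \<Longrightarrow> M i j = 0" and pd: "pos_def_on I M"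
    and inv: "\<And>i j. i \<in> I \<Longrightarrow> j \<in> I \<Longrightarrow> mat_mult_on I (mat_mult_on I M M) Q i j = id_mat i j"
    and comm: "\<And>N i j. (\<And>i j. i \<in> I \<Longrightarrow> j \<in> I \<Longrightarrow> mat_mult_on I N Q i j = mat_mult_on I Q N i j) \<Longrightarrow>
           i \<in> I \<Longrightarrow> j \<in> I \<Longrightarrow> mat_mult_on I N M i j = mat_mult_on I M N i j"
    using exists_inv_sqrt_on[OF assms] by blast
  have M: "inv_sqrt_on I Q = M" by (rule inv_sqrt_on_eqI[OF fin symQ zero pd inv comm])
  have sym: "symmetric_on I M" using pd unfolding pos_def_on_def symmetric_on_def by blast
  have right_inv: "mat_mult_on I Q (mat_mult_on I M M) i j = id_mat i j" if "i \<in> I" "j \<in> I" for i j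
    by (rule symmetric_on_left_inverse_right_inverse[OF symmetric_on_mat_mult_on_self[OF sym] symQ inv that])
  show "symmetric_on I (inv_sqrt_on I Q)" using sym unfolding M .
  show "mat_mult_on I (mat_mult_on I (inv_sqrt_on I Q) Q) (inv_sqrt_on I Q) i j = id_mat i j"
    if "i \<in> I" "j \<in> I" for i j
  proof -
    have "mat_mult_on I (mat_mult_on I M Q) M i j = mat_mult_on I (mat_mult_on I Q M) M i j"
      by (rule mat_mult_on_cong) (use comm[of Q] \<open>i \<in> I\<close> in simp_all)
    then show ?thesis using right_inv[OF that] unfolding M by (simp add: mat_mult_on_assoc)
  qed
  show "sq_norm_on I (mat_vec_on I (inv_sqrt_on I Q) g) \<le> sq_norm_on I g / \<mu>"
    unfolding M using sq_norm_on_mat_vec_on_inv_sqrt_le[OF fin sym \<open>0 < \<mu>\<close> lower right_inv] .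
qed

section \<open>A Chernoff bound\<close>

lemma exp_le_quadratic:
  fixes z :: real
  assumes "\<bar>z\<bar> \<le> 1"
  shows "exp z \<le> 1 + z + z\<^sup>2"
proof (cases "0 \<le> z")
  case True
  then show ?thesis using exp_bound[of z] assms by simp
next
  case False
  define t where "t = - z"
  have t: "0 < t" "t \<le> 1" using False assms unfolding t_def by auto
  then have "0 < 1 - t + t\<^sup>2" using zero_less_power2[of t] by linarith
  have "1 \<le> 1 + t ^ 3" using t by simp
  also have "\<dots> = (1 - t + t\<^sup>2) * (1 + t)" by (simp add: algebra_simps power2_eq_square power3_eq_cube)
  also have "\<dots> \<le> (1 - t + t\<^sup>2) * exp t"
    using \<open>0 < 1 - t + t\<^sup>2\<close> by (intro mult_left_mono) auto
  finally have "exp (- t) \<le> 1 - t + t\<^sup>2" by (simp add: exp_minus field_simps)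
  then show ?thesis unfolding t_def by simp
qed

lemma expectation_exp_le:
  fixes P :: "'a pmf" and Y :: "'a \<Rightarrow> real"
  assumes fin: "finite (set_pmf P)"
    and bounded: "\<And>w. w \<in> set_pmf P \<Longrightarrow> \<bar>Y w\<bar> \<le> L"
    and mean: "measure_pmf.expectation P Y = 0"
    and variance: "measure_pmf.expectation P (\<lambda>w. (Y w)\<^sup>2) \<le> 1"
    and "0 \<le> \<theta>" "\<theta> * L \<le> 1"
  shows "measure_pmf.expectation P (\<lambda>w. exp (\<theta> * Y w)) \<le> exp (\<theta>\<^sup>2)"
proof -
  have E: "measure_pmf.expectation P f = (\<Sum>w\<in>set_pmf P. f w * pmf P w)" for f :: "'a \<Rightarrow> real"
    by (rule integral_measure_pmf_real) (use fin in auto)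
  have "measure_pmf.expectation P (\<lambda>w. exp (\<theta> * Y w))
      \<le> (\<Sum>w\<in>set_pmf P. (1 + \<theta> * Y w + \<theta>\<^sup>2 * (Y w)\<^sup>2) * pmf P w)"
    unfolding E
  proof (intro sum_mono mult_right_mono)
    fix w assume "w \<in> set_pmf P"
    then have "\<bar>\<theta> * Y w\<bar> \<le> 1"
      using bounded[of w] \<open>0 \<le> \<theta>\<close> \<open>\<theta> * L \<le> 1\<close> by (metis abs_mult abs_of_nonneg mult_left_mono order_trans)
    then show "exp (\<theta> * Y w) \<le> 1 + \<theta> * Y w + \<theta>\<^sup>2 * (Y w)\<^sup>2"
      using exp_le_quadratic[of "\<theta> * Y w"] by (simp add: power_mult_distrib)
  qed simp
  also have "\<dots> = 1 + \<theta> * measure_pmf.expectation P Y + \<theta>\<^sup>2 * measure_pmf.expectation P (\<lambda>w. (Y w)\<^sup>2)"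
    unfolding E using sum_pmf_eq_1[OF fin subset_refl]
    by (simp add: algebra_simps sum.distrib sum_distrib_left)
  also have "\<dots> \<le> 1 + \<theta>\<^sup>2" using mean variance by (simp add: mult_left_le)
  also have "\<dots> \<le> exp (\<theta>\<^sup>2)" by (rule exp_ge_add_one_self)
  finally show ?thesis .
qed

lemma prob_sum_Pi_pmf_ge:
  fixes P :: "'a pmf" and Y :: "'a \<Rightarrow> real"
  assumes fin: "finite (set_pmf P)"
    and bounded: "\<And>w. w \<in> set_pmf P \<Longrightarrow> \<bar>Y w\<bar> \<le> L"
    and mean: "measure_pmf.expectation P Y = 0"
    and variance: "measure_pmf.expectation P (\<lambda>w. (Y w)\<^sup>2) \<le> 1"
    and "0 \<le> \<theta>" "\<theta> * L \<le> 1"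
  shows "measure_pmf.prob (Pi_pmf {..<n} d (\<lambda>_. P)) {ws. s \<le> (\<Sum>t<n. Y (ws t))}
           \<le> exp (real n * \<theta>\<^sup>2 - \<theta> * s)"
proof -
  define DP where "DP = Pi_pmf {..<n} d (\<lambda>_. P)"
  define E where "E = {ws. s \<le> (\<Sum>t<n. Y (ws t))}"
  have fin_DP: "finite (set_pmf DP)"
    unfolding DP_def by (subst set_Pi_pmf) (use fin in auto)
  have "measure_pmf.prob DP E = measure_pmf.expectation DP (indicator E)" by simp
  also have "\<dots> \<le> measure_pmf.expectation DP (\<lambda>ws. exp (- (\<theta> * s)) * (\<Prod>t<n. exp (\<theta> * Y (ws t))))"
  proof (rule integral_mono)
    fix ws
    have "exp (- (\<theta> * s)) * (\<Prod>t<n. exp (\<theta> * Y (ws t))) = exp (\<theta> * (\<Sum>t<n. Y (ws t)) - \<theta> * s)"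
      by (simp add: sum_distrib_left exp_sum exp_diff exp_minus field_simps)
    moreover have "1 \<le> exp (\<theta> * (\<Sum>t<n. Y (ws t)) - \<theta> * s)" if "ws \<in> E"
      using that \<open>0 \<le> \<theta>\<close> unfolding E_def by (simp add: mult_left_mono)
    ultimately show "indicator E ws \<le> exp (- (\<theta> * s)) * (\<Prod>t<n. exp (\<theta> * Y (ws t)))"
      by (cases "ws \<in> E") auto
  qed (auto intro: integrable_measure_pmf_finite[OF fin_DP])
  also have "\<dots> = exp (- (\<theta> * s)) * measure_pmf.expectation DP (\<lambda>ws. \<Prod>t\<in>{..<n}. exp (\<theta> * Y (ws t)))"
    by simp
  also have "measure_pmf.expectation DP (\<lambda>ws. \<Prod>t\<in>{..<n}. exp (\<theta> * Y (ws t)))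
      = (\<Prod>t<n. measure_pmf.expectation P (\<lambda>w. exp (\<theta> * Y w)))"
    unfolding DP_def by (rule expectation_prod_Pi_pmf[where f = "\<lambda>_ w. exp (\<theta> * Y w)"])
       (auto intro: integrable_measure_pmf_finite[OF fin])
  also have "exp (- (\<theta> * s)) * \<dots> \<le> exp (- (\<theta> * s)) * exp (\<theta>\<^sup>2) ^ n"
    using expectation_exp_le[OF assms]
    by (simp add: power_mono)
  also have "\<dots> = exp (real n * \<theta>\<^sup>2 - \<theta> * s)"
    by (simp add: exp_of_nat_mult[symmetric] exp_diff exp_minus field_simps)
  finally show ?thesis unfolding DP_def E_def .
qed

lemma l2_on_linf_on_le:
  assumes "finite I" "I \<noteq> {}" "card I \<le> r" and bounded: "\<And>i. i \<in> I \<Longrightarrow> \<bar>v i\<bar> \<le> s"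
  shows "l2_on I v \<le> sqrt (real r) * s" and "linf_on I v \<le> s"
proof -
  have "0 \<le> s" using assms(2) bounded by (meson abs_ge_zero all_not_in_conv order_trans)
  have "(\<Sum>i\<in>I. (v i)\<^sup>2) \<le> (\<Sum>i\<in>I. s\<^sup>2)"
    using bounded \<open>0 \<le> s\<close> by (intro sum_mono) (metis abs_le_square_iff abs_of_nonneg)
  also have "\<dots> \<le> real r * s\<^sup>2" using assms(3) by (simp add: mult_right_mono)
  finally show "l2_on I v \<le> sqrt (real r) * s"
    unfolding l2_on_def using \<open>0 \<le> s\<close> by (metis real_sqrt_abs real_sqrt_le_mono real_sqrt_mult abs_of_nonneg)
  show "linf_on I v \<le> s" unfolding linf_on_def using assms by simp
qed

lemma ln_gt_1_of_ge_3:
  assumes "3 \<le> k"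
  shows "1 < ln (real k)"
proof -
  have "ln 3 \<le> ln (real k)" using assms by simp
  then show ?thesis using ln3_gt_1 by linarith
qed

section \<open>The topic model\<close>

lemma sum_abs_power2_le_weighted:
  fixes a p :: "'a \<Rightarrow> real"
  assumes pos: "\<And>w. w \<in> W \<Longrightarrow> 0 < p w" and "sum p W \<le> 1"
  shows "(\<Sum>w\<in>W. \<bar>a w\<bar>)\<^sup>2 \<le> (\<Sum>w\<in>W. (a w)\<^sup>2 / p w)"
proof -
  have "(\<Sum>w\<in>W. \<bar>a w\<bar>)\<^sup>2 = (\<Sum>w\<in>W. (\<bar>a w\<bar> / sqrt (p w)) * sqrt (p w))\<^sup>2"
  proof (intro arg_cong[where f = "\<lambda>t. t\<^sup>2"] sum.cong refl)
    fix w assume "w \<in> W"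
    then show "\<bar>a w\<bar> = \<bar>a w\<bar> / sqrt (p w) * sqrt (p w)" using pos[of w] by simp
  qed
  also have "\<dots> \<le> (\<Sum>w\<in>W. (\<bar>a w\<bar> / sqrt (p w))\<^sup>2) * (\<Sum>w\<in>W. (sqrt (p w))\<^sup>2)"
    by (rule Cauchy_Schwarz_ineq_sum)
  also have "\<dots> = (\<Sum>w\<in>W. (a w)\<^sup>2 / p w) * sum p W"
  proof (intro arg_cong2[where f = "(*)"] sum.cong refl)
    fix w assume "w \<in> W"
    then show "(\<bar>a w\<bar> / sqrt (p w))\<^sup>2 = (a w)\<^sup>2 / p w" "(sqrt (p w))\<^sup>2 = p w"
      using pos[of w] by (simp_all add: power_divide)
  qed
  also have "\<dots> \<le> (\<Sum>w\<in>W. (a w)\<^sup>2 / p w)"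
    using assms by (intro mult_left_le sum_nonneg divide_nonneg_pos) auto
  finally show ?thesis .
qed

locale topic_model =
  fixes D k r :: nat and \<tau> \<kappa> :: real and A :: "nat \<Rightarrow> nat \<Rightarrow> real" and x :: "nat \<Rightarrow> real"
  assumes topic_matrix: "topic_matrix D k A" and simplex: "simplex_pt k x" and r_pos: "1 \<le> r"
    and \<tau>_pos: "0 < \<tau>" and \<tau>_le_one: "\<tau> \<le> 1" and \<kappa>_pos: "0 < \<kappa>"
    and A1: "assm_A1 k r \<tau> x" and A2: "assm_A2 D k r \<kappa> A"
begin

abbreviation R where "R \<equiv> supp_set k x"
abbreviation W where "W \<equiv> {w. w < D \<and> (\<exists>l\<in>R. A w l \<noteq> 0)}"
abbreviation p where "p w \<equiv> row_inner R A w x"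
abbreviation Q where "Q \<equiv> fisher D R A x"
abbreviation M where "M \<equiv> inv_sqrt_on R Q"

lemma supp_subset: "R \<subseteq> {..<k}" by (auto simp: supp_set_def)
lemma finite_supp: "finite R" using supp_subset finite_subset by blast
lemma card_supp: "card R \<le> r" using A1 unfolding assm_A1_def by simp
lemma x_nonneg: "i < k \<Longrightarrow> 0 \<le> x i" using simplex unfolding simplex_pt_def by simp
lemma x_outside_supp: "i \<notin> R \<Longrightarrow> x i = 0"
  using simplex unfolding simplex_pt_def supp_set_def by (cases "i < k") auto
lemma x_lower_bound: "j \<in> R \<Longrightarrow> \<tau> / real r \<le> x j" using A1 unfolding assm_A1_def by simp
lemma x_pos: "j \<in> R \<Longrightarrow> 0 < x j"
  using x_lower_bound[of j] divide_pos_pos[OF \<tau>_pos, of "real r"] r_pos by simp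

lemma A_nonneg: "w < D \<Longrightarrow> i < k \<Longrightarrow> 0 \<le> A w i" using topic_matrix unfolding topic_matrix_def by simp
lemma column_sum: "i < k \<Longrightarrow> (\<Sum>w<D. A w i) = 1" using topic_matrix unfolding topic_matrix_def by simp

lemma sum_topics_eq_sum_supp: "(\<Sum>i<k. f i * x i) = (\<Sum>i\<in>R. f i * x i)"
  by (rule sum.mono_neutral_right) (use supp_subset x_outside_supp in auto)

lemma sum_x_supp: "(\<Sum>i\<in>R. x i) = 1"
  using sum_topics_eq_sum_supp[of "\<lambda>_. 1"] simplex unfolding simplex_pt_def by simp

lemma supp_nonempty: "R \<noteq> {}" using sum_x_supp by auto

lemma p_nonneg: "w < D \<Longrightarrow> 0 \<le> p w"
  unfolding row_inner_def using supp_subset by (intro sum_nonneg mult_nonneg_nonneg A_nonneg x_nonneg) auto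

lemma p_lower_bound: "w < D \<Longrightarrow> (\<tau> / real r) * (\<Sum>j\<in>R. A w j) \<le> p w"
  unfolding row_inner_def sum_distrib_left
proof (intro sum_mono)
  fix j assume "w < D" "j \<in> R"
  then have "\<tau> / real r * A w j \<le> x j * A w j"
    using supp_subset by (intro mult_right_mono x_lower_bound A_nonneg) auto
  then show "\<tau> / real r * A w j \<le> A w j * x j" by (simp add: mult.commute)
qed

lemma p_pos: "w \<in> W \<Longrightarrow> 0 < p w"
proof -
  assume "w \<in> W"
  then obtain l where l: "l \<in> R" "A w l \<noteq> 0" and "w < D" by auto
  then have "0 < A w l * x l" using A_nonneg[of w l] x_pos[of l] supp_subset by force
  also have "\<dots> \<le> p w" unfolding row_inner_def
    using l \<open>w < D\<close> supp_subset finite_supp by (intro member_le_sum) (auto intro!: mult_nonneg_nonneg A_nonneg x_nonneg)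
  finally show ?thesis .
qed

lemma p_outside_W: "w < D \<Longrightarrow> w \<notin> W \<Longrightarrow> p w = 0"
  unfolding row_inner_def by (intro sum.neutral) auto

lemma finite_W: "finite W" by (rule finite_subset[of _ "{..<D}"]) auto

lemma column_sum_W: "j \<in> R \<Longrightarrow> (\<Sum>w\<in>W. A w j) = 1"
proof -
  assume "j \<in> R"
  then have "(\<Sum>w\<in>W. A w j) = (\<Sum>w<D. A w j)" by (intro sum.mono_neutral_left) auto
  then show ?thesis using column_sum \<open>j \<in> R\<close> supp_subset by auto
qed

lemma sum_p_W: "(\<Sum>w\<in>W. p w) = 1"
proof -
  have "(\<Sum>w\<in>W. p w) = (\<Sum>j\<in>R. (\<Sum>w\<in>W. A w j) * x j)"
    unfolding row_inner_def by (simp add: sum.swap[of _ W] sum_distrib_right)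
  also have "\<dots> = (\<Sum>j\<in>R. x j)" by (intro sum.cong refl) (simp add: column_sum_W)
  finally show ?thesis using sum_x_supp by simp
qed

lemma fisher_eq: "Q i j = (\<Sum>w\<in>W. A w i * A w j / p w)" by (simp add: fisher_def)

lemma symmetric_fisher: "symmetric_on R Q" unfolding symmetric_on_def fisher_eq by (simp add: mult.commute)

lemma quad_form_fisher: "inner_on R v (mat_vec_on R Q v) = (\<Sum>w\<in>W. (\<Sum>j\<in>R. A w j * v j)\<^sup>2 / p w)"
proof -
  have "(\<Sum>w\<in>W. (\<Sum>j\<in>R. A w j * v j)\<^sup>2 / p w)
      = (\<Sum>w\<in>W. \<Sum>i\<in>R. \<Sum>j\<in>R. (A w i * v i) * (A w j * v j) / p w)"
    by (simp add: power2_eq_square sum_product sum_divide_distrib)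
  also have "\<dots> = (\<Sum>i\<in>R. \<Sum>j\<in>R. \<Sum>w\<in>W. (A w i * v i) * (A w j * v j) / p w)"
    by (subst sum.swap) (intro sum.cong refl sum.swap)
  also have "\<dots> = (\<Sum>i\<in>R. \<Sum>j\<in>R. v i * Q i j * v j)"
    unfolding fisher_eq by (intro sum.cong refl) (simp add: sum_distrib_left sum_distrib_right algebra_simps)
  finally show ?thesis by (simp add: quad_form_eq_inner_on)
qed

text \<open>(A2) bounds \<open>\<parallel>v\<parallel>\<^sub>1\<close> by \<open>\<kappa> \<Sum>\<^sub>w |\<langle>a\<^sub>w, v\<rangle>|\<close>, and Cauchy-Schwarz with weights \<open>p\<close>
  bounds the latter by the Fisher quadratic form.\<close>
lemma fisher_lower_bound: "sq_norm_on R v / \<kappa>\<^sup>2 \<le> inner_on R v (mat_vec_on R Q v)"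
proof -
  define a where "a w = (\<Sum>j\<in>R. A w j * v j)" for w
  define v' where "v' i = (if i \<in> R then v i else 0)" for i
  have "{i. i < k \<and> v' i \<noteq> 0} \<subseteq> R" unfolding v'_def by auto
  then have "card {i. i < k \<and> v' i \<noteq> 0} \<le> r"
    using card_mono[OF finite_supp] card_supp by (meson le_trans)
  moreover have "\<forall>i\<ge>k. v' i = 0" using supp_subset unfolding v'_def by auto
  ultimately have "(\<Sum>i<k. \<bar>v' i\<bar>) / \<kappa> \<le> (\<Sum>w<D. \<bar>\<Sum>i<k. A w i * v' i\<bar>)"
    using A2 unfolding assm_A2_def by blast
  moreover have restrict: "(\<Sum>i<k. if i \<in> R then f i else 0) = sum f R" for f :: "nat \<Rightarrow> real"
    using supp_subset by (simp add: sum.inter_restrict[symmetric] Int_absorb1)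
  then have "(\<Sum>i<k. \<bar>v' i\<bar>) = (\<Sum>i\<in>R. \<bar>v i\<bar>)" "(\<Sum>i<k. A w i * v' i) = a w" for w
    unfolding v'_def a_def by (simp_all add: if_distrib cong: if_cong)
  moreover have "(\<Sum>w<D. \<bar>a w\<bar>) = (\<Sum>w\<in>W. \<bar>a w\<bar>)"
    by (rule sum.mono_neutral_right) (auto simp: a_def)
  ultimately have "(\<Sum>i\<in>R. \<bar>v i\<bar>) / \<kappa> \<le> (\<Sum>w\<in>W. \<bar>a w\<bar>)" by simp
  then have "((\<Sum>i\<in>R. \<bar>v i\<bar>) / \<kappa>)\<^sup>2 \<le> (\<Sum>w\<in>W. \<bar>a w\<bar>)\<^sup>2"
    using \<kappa>_pos by (intro power_mono) (auto intro: sum_nonneg)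
  also have "\<dots> \<le> inner_on R v (mat_vec_on R Q v)"
    unfolding quad_form_fisher a_def[symmetric] using p_pos sum_p_W
    by (intro sum_abs_power2_le_weighted) auto
  finally have "(\<Sum>i\<in>R. \<bar>v i\<bar>)\<^sup>2 / \<kappa>\<^sup>2 \<le> inner_on R v (mat_vec_on R Q v)"
    by (simp add: power_divide)
  moreover have "sq_norm_on R v / \<kappa>\<^sup>2 \<le> (\<Sum>i\<in>R. \<bar>v i\<bar>)\<^sup>2 / \<kappa>\<^sup>2"
    using sq_norm_on_le_sum_abs_power2[OF finite_supp, of v] by (simp add: divide_right_mono)
  ultimately show ?thesis by linarith
qed

lemma inv_sqrt_fisher:
  shows "symmetric_on R M"
    and "\<And>i j. i \<in> R \<Longrightarrow> j \<in> R \<Longrightarrow> mat_mult_on R (mat_mult_on R M Q) M i j = id_mat i j"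
    and "sq_norm_on R (mat_vec_on R M g) \<le> \<kappa>\<^sup>2 * sq_norm_on R g"
proof -
  have lower: "1 / \<kappa>\<^sup>2 * sq_norm_on R v \<le> inner_on R v (mat_vec_on R Q v)" for v
    using fisher_lower_bound[of v] by simp
  have "0 < 1 / \<kappa>\<^sup>2" using \<kappa>_pos by simp
  note props = inv_sqrt_on_properties[OF finite_supp symmetric_fisher this lower]
  show "symmetric_on R M" "\<And>i j. i \<in> R \<Longrightarrow> j \<in> R \<Longrightarrow> mat_mult_on R (mat_mult_on R M Q) M i j = id_mat i j"
    by (fact props(1,2))+
  show "sq_norm_on R (mat_vec_on R M g) \<le> \<kappa>\<^sup>2 * sq_norm_on R g"
    using props(3)[of g] by (simp add: mult.commute)
qed

abbreviation P where "P \<equiv> word_pmf D k A x"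

lemma sum_p_lessThan: "(\<Sum>w<D. p w) = 1"
proof -
  have "(\<Sum>w<D. p w) = (\<Sum>w\<in>W. p w)"
    by (rule sum.mono_neutral_right) (auto simp: p_outside_W)
  then show ?thesis using sum_p_W by simp
qed

lemma pmf_word_pmf: "pmf P w = (if w < D then p w else 0)"
proof -
  define f where "f w = (if w < D then (\<Sum>i<k. A w i * x i) else 0)" for w
  have f_eq: "f w = (if w < D then p w else 0)" for w
    unfolding f_def row_inner_def sum_topics_eq_sum_supp ..
  have nonneg: "0 \<le> f w" for w unfolding f_eq using p_nonneg by auto
  have "(\<integral>\<^sup>+w. ennreal (f w) \<partial>count_space UNIV) = (\<Sum>w<D. ennreal (f w))"
    by (rule nn_integral_count_space') (auto simp: f_eq)
  also have "\<dots> = ennreal (\<Sum>w<D. f w)" using nonneg by simp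
  also have "(\<Sum>w<D. f w) = 1" unfolding f_eq using sum_p_lessThan by simp
  finally have "(\<integral>\<^sup>+w. ennreal (f w) \<partial>count_space UNIV) = 1" by simp
  then have "pmf (embed_pmf f) w = f w" by (rule pmf_embed_pmf[OF nonneg])
  then show ?thesis unfolding word_pmf_def f_def[symmetric] f_eq .
qed

lemma set_word_pmf: "set_pmf P \<subseteq> W"
proof
  fix w assume "w \<in> set_pmf P"
  then have "w < D" "p w \<noteq> 0" by (auto simp: set_pmf_iff pmf_word_pmf split: if_splits)
  then show "w \<in> W" using p_outside_W by blast
qed

lemma finite_set_word_pmf: "finite (set_pmf P)"
  using finite_subset[OF set_word_pmf finite_W] .

lemma expectation_word_pmf: "measure_pmf.expectation P f = (\<Sum>w\<in>W. f w * p w)"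
proof -
  have "measure_pmf.expectation P f = (\<Sum>w\<in>W. f w * pmf P w)"
    by (rule integral_measure_pmf_real) (use finite_W set_word_pmf in auto)
  then show ?thesis by (auto simp: pmf_word_pmf intro: sum.cong)
qed

definition whitened_score :: "nat \<Rightarrow> nat \<Rightarrow> real" where
  "whitened_score w i = mat_vec_on R M (\<lambda>j. A w j / p w - 1) i"

lemma whitened_grad_eq_sum: "whitened_grad n D k A x ws i = (\<Sum>t<n. whitened_score (ws t) i)"
proof -
  have "grad_f n R A x ws j - real n = (\<Sum>t<n. A (ws t) j / p (ws t) - 1)" for j
    by (simp add: grad_f_def sum_subtractf)
  then show ?thesis
    unfolding whitened_grad_def Let_def whitened_score_def mat_vec_on_def
    by (simp add: sum_distrib_left sum.swap[of _ R])
qed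

lemma expectation_whitened_score: "measure_pmf.expectation P (\<lambda>w. whitened_score w i) = 0"
proof -
  have "measure_pmf.expectation P (\<lambda>w. whitened_score w i) = (\<Sum>w\<in>W. \<Sum>j\<in>R. M i j * (A w j - p w))"
    unfolding expectation_word_pmf whitened_score_def mat_vec_on_def sum_distrib_right
  proof (intro sum.cong refl)
    fix w j assume "w \<in> W"
    show "M i j * (A w j / p w - 1) * p w = M i j * (A w j - p w)"
      using p_pos[OF \<open>w \<in> W\<close>] by (simp add: field_simps)
  qed
  also have "\<dots> = (\<Sum>j\<in>R. M i j * ((\<Sum>w\<in>W. A w j) - (\<Sum>w\<in>W. p w)))"
    by (subst sum.swap) (simp add: sum_distrib_left[symmetric] sum_subtractf)
  also have "\<dots> = 0" using column_sum_W sum_p_W by simp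
  finally show ?thesis .
qed

text \<open>Writing the score as \<open>z\<^sub>w - m\<close>, its second moment is \<open>e\<^sub>i\<^sup>T M Q M e\<^sub>i - m\<^sup>2 = 1 - m\<^sup>2\<close>.\<close>
lemma second_moment_whitened_score:
  assumes "i \<in> R"
  shows "measure_pmf.expectation P (\<lambda>w. (whitened_score w i)\<^sup>2) \<le> 1"
proof -
  define m where "m = (\<Sum>j\<in>R. M i j)"
  define z where "z w = (\<Sum>j\<in>R. M i j * A w j) / p w" for w
  have score: "whitened_score w i = z w - m" for w
    unfolding whitened_score_def mat_vec_on_def z_def m_def
    by (simp add: right_diff_distrib sum_subtractf sum_divide_distrib)
  have zp: "z w * p w = (\<Sum>j\<in>R. M i j * A w j)" if "w \<in> W" for w
    unfolding z_def using p_pos[OF that] by simp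
  have "(\<Sum>w\<in>W. z w * p w) = (\<Sum>w\<in>W. \<Sum>j\<in>R. M i j * A w j)" by (intro sum.cong refl) (simp add: zp)
  also have "\<dots> = (\<Sum>j\<in>R. M i j * (\<Sum>w\<in>W. A w j))" by (subst sum.swap) (simp add: sum_distrib_left)
  finally have first: "(\<Sum>w\<in>W. z w * p w) = m" unfolding m_def by (simp add: column_sum_W)
  have "(\<Sum>w\<in>W. (z w)\<^sup>2 * p w) = (\<Sum>w\<in>W. (\<Sum>j\<in>R. A w j * M i j)\<^sup>2 / p w)"
  proof (intro sum.cong refl)
    fix w assume "w \<in> W"
    then show "(z w)\<^sup>2 * p w = (\<Sum>j\<in>R. A w j * M i j)\<^sup>2 / p w"
      using zp[of w] p_pos[of w] by (simp add: power2_eq_square field_simps)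
  qed
  also have "\<dots> = inner_on R (M i) (mat_vec_on R Q (M i))" by (rule quad_form_fisher[symmetric])
  also have "\<dots> = (\<Sum>l\<in>R. M i l * (\<Sum>j\<in>R. Q l j * M j i))"
    unfolding inner_on_def mat_vec_on_def using inv_sqrt_fisher(1) \<open>i \<in> R\<close>
    unfolding symmetric_on_def by (intro sum.cong refl) auto
  also have "\<dots> = mat_mult_on R (mat_mult_on R M Q) M i i"
    by (simp add: mat_mult_on_assoc) (simp add: mat_mult_on_def)
  also have "\<dots> = 1" using inv_sqrt_fisher(2)[OF \<open>i \<in> R\<close> \<open>i \<in> R\<close>] by (simp add: id_mat_def)
  finally have second: "(\<Sum>w\<in>W. (z w)\<^sup>2 * p w) = 1" .
  have "measure_pmf.expectation P (\<lambda>w. (whitened_score w i)\<^sup>2)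
      = (\<Sum>w\<in>W. (z w)\<^sup>2 * p w) - 2 * m * (\<Sum>w\<in>W. z w * p w) + m\<^sup>2 * (\<Sum>w\<in>W. p w)"
    unfolding expectation_word_pmf score
    by (simp add: power2_diff algebra_simps sum.distrib sum_subtractf sum_distrib_left)
  also have "\<dots> = 1 - m\<^sup>2" unfolding first second sum_p_W by (simp add: power2_eq_square)
  finally show ?thesis by simp
qed

text \<open>By (A1) every word satisfies \<open>\<Sum>\<^sub>j\<^sub>\<in>\<^sub>R A\<^sub>w\<^sub>j \<le> (r/\<tau>) p\<^sub>w\<close>, so the unwhitened score has
  \<open>\<ell>\<^sub>1\<close>-norm at most \<open>2r/\<tau>\<close>; whitening costs a factor \<open>\<kappa>\<close>.\<close>
lemma abs_whitened_score_le:
  assumes "w \<in> W" "i \<in> R"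
  shows "\<bar>whitened_score w i\<bar> \<le> 2 * \<kappa> * real r / \<tau>"
proof -
  define g where "g j = A w j / p w - 1" for j
  have "0 < p w" "w < D" using p_pos[OF \<open>w \<in> W\<close>] \<open>w \<in> W\<close> by auto
  have "(\<Sum>j\<in>R. A w j) \<le> p w * (real r / \<tau>)"
    using p_lower_bound[OF \<open>w < D\<close>] \<tau>_pos r_pos by (simp add: field_simps)
  then have row: "(\<Sum>j\<in>R. A w j) / p w \<le> real r / \<tau>"
    using \<open>0 < p w\<close> by (simp add: divide_le_eq mult.commute)
  have "real (card R) \<le> real r" using card_supp by simp
  also have "\<dots> \<le> real r / \<tau>" using \<tau>_pos \<tau>_le_one by (simp add: le_divide_eq mult_left_le)
  finally have "real (card R) \<le> real r / \<tau>" .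
  have "(\<Sum>j\<in>R. \<bar>g j\<bar>) \<le> (\<Sum>j\<in>R. A w j / p w + 1)"
  proof (intro sum_mono)
    fix j assume "j \<in> R"
    then have "0 \<le> A w j / p w" using A_nonneg[OF \<open>w < D\<close>] supp_subset \<open>0 < p w\<close> by auto
    then show "\<bar>g j\<bar> \<le> A w j / p w + 1" unfolding g_def by linarith
  qed
  also have "\<dots> = (\<Sum>j\<in>R. A w j) / p w + real (card R)"
    by (simp add: sum.distrib sum_divide_distrib)
  also have "\<dots> \<le> 2 * real r / \<tau>" using row \<open>real (card R) \<le> real r / \<tau>\<close> by simp
  finally have l1: "(\<Sum>j\<in>R. \<bar>g j\<bar>) \<le> 2 * real r / \<tau>" .
  have "(whitened_score w i)\<^sup>2 \<le> sq_norm_on R (mat_vec_on R M g)"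
    using power2_le_sq_norm_on[OF finite_supp \<open>i \<in> R\<close>] unfolding whitened_score_def g_def .
  also have "\<dots> \<le> \<kappa>\<^sup>2 * sq_norm_on R g" by (rule inv_sqrt_fisher(3))
  also have "\<dots> \<le> \<kappa>\<^sup>2 * (\<Sum>j\<in>R. \<bar>g j\<bar>)\<^sup>2"
    by (intro mult_left_mono sq_norm_on_le_sum_abs_power2 finite_supp) simp
  also have "\<dots> \<le> \<kappa>\<^sup>2 * (2 * real r / \<tau>)\<^sup>2"
    using l1 by (intro mult_left_mono power_mono) (auto intro: sum_nonneg)
  also have "\<dots> = (2 * \<kappa> * real r / \<tau>)\<^sup>2" by (simp add: power_mult_distrib power_divide)
  finally show ?thesis using \<kappa>_pos \<tau>_pos by (simp add: abs_le_square_iff[symmetric])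
qed

lemma prob_abs_whitened_grad_gt:
  assumes "i \<in> R" "0 \<le> \<theta>" "\<theta> * (2 * \<kappa> * real r / \<tau>) \<le> 1"
  shows "measure_pmf.prob (document_pmf n D k A x) {ws. s < \<bar>whitened_grad n D k A x ws i\<bar>}
           \<le> 2 * exp (real n * \<theta>\<^sup>2 - \<theta> * s)"
proof -
  let ?DP = "Pi_pmf {..<n} 0 (\<lambda>_. P)"
  have tail: "measure_pmf.prob ?DP {ws. s \<le> (\<Sum>t<n. Y (ws t))} \<le> exp (real n * \<theta>\<^sup>2 - \<theta> * s)"
    if "Y = (\<lambda>w. whitened_score w i) \<or> Y = (\<lambda>w. - whitened_score w i)" for Y
  proof (rule prob_sum_Pi_pmf_ge[OF finite_set_word_pmf _ _ _ assms(2,3)])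
    show "\<bar>Y w\<bar> \<le> 2 * \<kappa> * real r / \<tau>" if "w \<in> set_pmf P" for w
    proof -
      have "w \<in> W" using set_word_pmf that by blast
      then show ?thesis using abs_whitened_score_le[OF \<open>w \<in> W\<close> \<open>i \<in> R\<close>] \<open>Y = _ \<or> Y = _\<close> by auto
    qed
    show "measure_pmf.expectation P Y = 0" "measure_pmf.expectation P (\<lambda>w. (Y w)\<^sup>2) \<le> 1"
      using expectation_whitened_score second_moment_whitened_score[OF \<open>i \<in> R\<close>] \<open>Y = _ \<or> Y = _\<close>
      by auto
  qed
  have "measure_pmf.prob ?DP {ws. s < \<bar>whitened_grad n D k A x ws i\<bar>}
      \<le> measure_pmf.prob ?DP ({ws. s \<le> (\<Sum>t<n. whitened_score (ws t) i)}
                             \<union> {ws. s \<le> (\<Sum>t<n. - whitened_score (ws t) i)})"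
    by (rule measure_pmf.finite_measure_mono) (auto simp: whitened_grad_eq_sum sum_negf)
  also have "\<dots> \<le> measure_pmf.prob ?DP {ws. s \<le> (\<Sum>t<n. whitened_score (ws t) i)}
                 + measure_pmf.prob ?DP {ws. s \<le> (\<Sum>t<n. - whitened_score (ws t) i)}"
    by (rule measure_subadditive) auto
  also have "\<dots> \<le> 2 * exp (real n * \<theta>\<^sup>2 - \<theta> * s)"
    using tail[of "\<lambda>w. whitened_score w i"] tail[of "\<lambda>w. - whitened_score w i"] by simp
  finally show ?thesis unfolding document_pmf_def .
qed

text \<open>The Chernoff bound at level \<open>s = 4 \<surd>(n ln k)\<close> with \<open>\<theta> = s / 2n\<close> gives \<open>2 k\<^sup>-\<^sup>4\<close> per
  coordinate; the lower bound on \<open>n\<close> is exactly what makes \<open>\<theta>\<close> admissible.\<close>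
lemma prob_abs_whitened_grad_gt_level:
  assumes "3 \<le> k" and n_large: "16 * \<kappa>\<^sup>2 * (real r)\<^sup>2 * ln (real k) / \<tau>\<^sup>2 \<le> real n"
    and "i \<in> R"
  shows "measure_pmf.prob (document_pmf n D k A x)
           {ws. 4 * sqrt (real n * ln (real k)) < \<bar>whitened_grad n D k A x ws i\<bar>} \<le> 2 / real k ^ 4"
proof -
  define l where "l = ln (real k)"
  have "1 < l" using ln_gt_1_of_ge_3[OF \<open>3 \<le> k\<close>] by (simp add: l_def)
  have n_large': "16 * \<kappa>\<^sup>2 * (real r)\<^sup>2 * l \<le> real n * \<tau>\<^sup>2"
    using n_large \<tau>_pos unfolding l_def by (simp add: divide_le_eq)
  moreover have "0 < 16 * \<kappa>\<^sup>2 * (real r)\<^sup>2 * l" using \<kappa>_pos r_pos \<open>1 < l\<close> by simp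
  ultimately have "0 < real n * \<tau>\<^sup>2" by linarith
  then have "0 < real n" by (simp add: zero_less_mult_iff)
  define s where "s = 4 * sqrt (real n * l)"
  define \<theta> where "\<theta> = s / (2 * real n)"
  have s_sq: "s\<^sup>2 = 16 * real n * l" using \<open>0 < real n\<close> \<open>1 < l\<close> by (simp add: s_def power_mult_distrib)
  have "0 \<le> \<theta>" using \<open>0 < real n\<close> \<open>1 < l\<close> by (simp add: \<theta>_def s_def)
  have "(\<kappa> * real r * s)\<^sup>2 = real n * (16 * \<kappa>\<^sup>2 * (real r)\<^sup>2 * l)"
    unfolding power_mult_distrib s_sq by (simp only: mult_ac)
  also have "\<dots> \<le> real n * (real n * \<tau>\<^sup>2)"
    using \<open>0 < real n\<close> n_large' by (intro mult_left_mono) auto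
  also have "\<dots> = (real n * \<tau>)\<^sup>2" by (simp add: power2_eq_square)
  finally have "(\<kappa> * real r * s)\<^sup>2 \<le> (real n * \<tau>)\<^sup>2" .
  then have "\<kappa> * real r * s \<le> real n * \<tau>"
    by (rule power2_le_imp_le) (use \<open>0 < real n\<close> \<tau>_pos in simp)
  then have admissible: "\<theta> * (2 * \<kappa> * real r / \<tau>) \<le> 1"
    using \<open>0 < real n\<close> \<tau>_pos by (simp add: \<theta>_def field_simps)
  have "real n * \<theta>\<^sup>2 - \<theta> * s = - (s\<^sup>2 / (4 * real n))"
    using \<open>0 < real n\<close> by (simp add: \<theta>_def power2_eq_square field_simps)
  also have "\<dots> = - (4 * l)" using \<open>0 < real n\<close> by (simp add: s_sq)
  finally have "real n * \<theta>\<^sup>2 - \<theta> * s = - (4 * l)" .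
  moreover have "exp (4 * l) = real k ^ 4"
    using exp_of_nat_mult[of 4 l] \<open>3 \<le> k\<close> by (simp add: l_def)
  ultimately have "exp (real n * \<theta>\<^sup>2 - \<theta> * s) = 1 / real k ^ 4"
    by (simp add: exp_minus divide_inverse)
  then show ?thesis
    using prob_abs_whitened_grad_gt[OF \<open>i \<in> R\<close> \<open>0 \<le> \<theta>\<close> admissible, of n s] by (simp add: s_def l_def)
qed

lemma prob_whitened_grad_bounded:
  assumes "3 \<le> k" and n_large: "16 * \<kappa>\<^sup>2 * (real r)\<^sup>2 * ln (real k) / \<tau>\<^sup>2 \<le> real n"
  shows "1 - 2 / real k ^ 3 \<le> measure_pmf.prob (document_pmf n D k A x)
          {ws. l2_on R (whitened_grad n D k A x ws) \<le> 4 * ln (real k) * sqrt (real n * real r) \<and>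
               linf_on R (whitened_grad n D k A x ws) \<le> 4 * ln (real k) * sqrt (real n)}"
proof -
  let ?DP = "document_pmf n D k A x"
  let ?g = "whitened_grad n D k A x"
  define l where "l = ln (real k)"
  define s where "s = 4 * sqrt (real n * l)"
  have coordinate: "measure_pmf.prob ?DP {ws. s < \<bar>?g ws i\<bar>} \<le> 2 / real k ^ 4" if "i \<in> R" for i
    using prob_abs_whitened_grad_gt_level[OF assms that] unfolding s_def l_def .
  have "measure_pmf.prob ?DP (\<Union>i\<in>R. {ws. s < \<bar>?g ws i\<bar>})
      \<le> (\<Sum>i\<in>R. measure_pmf.prob ?DP {ws. s < \<bar>?g ws i\<bar>})"
    by (rule measure_pmf.finite_measure_subadditive_finite) (use finite_supp in auto)
  also have "\<dots> \<le> (\<Sum>i\<in>R. 2 / real k ^ 4)" by (intro sum_mono coordinate)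
  also have "\<dots> = real (card R) * (2 / real k ^ 4)" by simp
  also have "\<dots> \<le> real k * (2 / real k ^ 4)"
    using card_mono[OF finite_lessThan supp_subset] by (intro mult_right_mono) auto
  also have "\<dots> = 2 / real k ^ 3" using \<open>3 \<le> k\<close> by (simp add: field_simps power_eq_if)
  finally have bad: "measure_pmf.prob ?DP (\<Union>i\<in>R. {ws. s < \<bar>?g ws i\<bar>}) \<le> 2 / real k ^ 3" .
  have "1 < l" using ln_gt_1_of_ge_3[OF \<open>3 \<le> k\<close>] by (simp add: l_def)
  have "sqrt l \<le> sqrt (l\<^sup>2)" using \<open>1 < l\<close> by (intro real_sqrt_le_mono) (simp add: power2_eq_square)
  then have "sqrt l \<le> l" using \<open>1 < l\<close> by simp
  then have "s \<le> 4 * l * sqrt (real n)" "sqrt (real r) * s \<le> 4 * l * sqrt (real n * real r)"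
    unfolding s_def real_sqrt_mult using \<open>sqrt l \<le> l\<close>
    by (simp_all add: mult_right_mono mult.commute mult.left_commute)
  then have good: "(\<forall>i\<in>R. \<bar>?g ws i\<bar> \<le> s) \<Longrightarrow>
      l2_on R (?g ws) \<le> 4 * l * sqrt (real n * real r) \<and> linf_on R (?g ws) \<le> 4 * l * sqrt (real n)"
    for ws using l2_on_linf_on_le[OF finite_supp supp_nonempty card_supp, of "?g ws" s] by auto
  have "1 - 2 / real k ^ 3 \<le> 1 - measure_pmf.prob ?DP (\<Union>i\<in>R. {ws. s < \<bar>?g ws i\<bar>})"
    using bad by simp
  also have "\<dots> = measure_pmf.prob ?DP (UNIV - (\<Union>i\<in>R. {ws. s < \<bar>?g ws i\<bar>}))"
    using measure_pmf.prob_compl[of "\<Union>i\<in>R. {ws. s < \<bar>?g ws i\<bar>}" ?DP] by simp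
  also have "\<dots> \<le> measure_pmf.prob ?DP
      {ws. l2_on R (?g ws) \<le> 4 * l * sqrt (real n * real r) \<and> linf_on R (?g ws) \<le> 4 * l * sqrt (real n)}"
    using good by (intro measure_pmf.finite_measure_mono) (auto simp: not_less)
  finally show ?thesis unfolding l_def .
qed

end

definition failure_prob :: "nat \<Rightarrow> real" where
  "failure_prob k = (if k < 3 then 1 else 2 / real k ^ 3)"

lemma failure_prob_tendsto_0: "failure_prob \<longlonglongrightarrow> 0"
proof -
  have "eventually (\<lambda>k. 2 * inverse (real k) ^ 3 = failure_prob k) sequentially"
    unfolding eventually_sequentially failure_prob_def
    by (auto simp: power_inverse divide_inverse intro!: exI[of _ 3])
  moreover have "(\<lambda>k. 2 * inverse (real k) ^ 3) \<longlonglongrightarrow> 2 * 0 ^ 3"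
    by (intro tendsto_intros lim_inverse_n)
  ultimately show ?thesis using Lim_transform_eventually by fastforce
qed

theorem lemma5p2:
  "\<exists>c > 0. \<exists>(C::real) > 0. \<exists>a::nat. \<exists>\<delta>::nat \<Rightarrow> real. \<delta> \<longlonglongrightarrow> 0 \<and>
     (\<forall>k D r n (\<tau>::real) (\<kappa>::real) A x.
        topic_matrix D k A \<and> simplex_pt k x \<and> r \<ge> 1 \<and> 0 < \<tau> \<and> \<tau> \<le> 1 \<and> \<kappa> > 0 \<and>
        assm_A1 k r \<tau> x \<and> assm_A2 D k r \<kappa> A \<and>
        real n \<ge> c * \<kappa>\<^sup>2 * (real r)\<^sup>2 * ln (real k) / \<tau>\<^sup>2 \<longrightarrow>
        measure_pmf.prob (document_pmf n D k A x)
          {ws. l2_on (supp_set k x) (whitened_grad n D k A x ws)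
                 \<le> C * (ln (real k)) ^ a * sqrt (real n * real r) \<and>
               linf_on (supp_set k x) (whitened_grad n D k A x ws)
                 \<le> C * (ln (real k)) ^ a * sqrt (real n)}
        \<ge> 1 - \<delta> k)"
proof (rule exI[of _ 16],
       intro conjI exI[of _ "4::real"] exI[of _ "1::nat"] exI[of _ failure_prob] allI impI)
  fix k D r n and \<tau> \<kappa> :: real and A x
  assume hyps: "topic_matrix D k A \<and> simplex_pt k x \<and> 1 \<le> r \<and> 0 < \<tau> \<and> \<tau> \<le> 1 \<and> 0 < \<kappa> \<and>
          assm_A1 k r \<tau> x \<and> assm_A2 D k r \<kappa> A \<and>
          16 * \<kappa>\<^sup>2 * (real r)\<^sup>2 * ln (real k) / \<tau>\<^sup>2 \<le> real n"
  then interpret topic_model D k r \<tau> \<kappa> A x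
    by unfold_locales auto
  show "1 - failure_prob k \<le> measure_pmf.prob (document_pmf n D k A x)
          {ws. l2_on R (whitened_grad n D k A x ws) \<le> 4 * ln (real k) ^ 1 * sqrt (real n * real r) \<and>
               linf_on R (whitened_grad n D k A x ws) \<le> 4 * ln (real k) ^ 1 * sqrt (real n)}"
    using hyps prob_whitened_grad_bounded by (simp add: failure_prob_def)
qed (simp_all add: failure_prob_tendsto_0)

end
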